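(* Let $F$ be a global function field with full constant field $\mathbb{F}_q$, with $n\ge1$ rational places $P_1,\dots,P_n$ and class number $h$; fix an integer $m\ge1$. Let $r\ge s\ge0$ be integers and let $x_1,\dots,x_m\ge0$ be real numbers with $x_1+\cdots+x_m\le1$ such that $|\mathcal{V}_m(r,s;\lfloor x_1n\rfloor,\dots,\lfloor x_mn\rfloor)|<h$. Let $G$ be a divisor of $F$ of degree $r$ with ${\rm supp}(G)\cap\{P_1,\dots,P_n\}=\emptyset$ such that for every $f\in\mathcal{L}(G)\setminus\{0\}$, if $E=(f)_0$ satisfies $j_\ell(E)\le2\lfloor x_\ell n\rfloor+\sum_{\nu=\ell+1}^m\lfloor x_\nu n\rfloor$ for $1\le\ell\le m$ and $J_m(E)\le2\sum_{\ell=1}^m(\ell+1)\lfloor x_\ell n\rfloor$, then $\deg(\overline E)\le s-1$. Assume that $|\mathcal{L}(G)|\cdot|M(x_1,\dots,x_m;\mathbf{0})|>q^{mn}$ and that $(m+1)n\ge s+2\sum_{l=1}^m(l+1)\lfloor x_ln\rfloor$. Let $\mathbf{c}\in\mathbb{F}_q^{mn}$ be such that $N_{\mathbf c}=\{f\in\mathcal{L}(G):\Phi(f)\in M(x_1,\dots,x_m;\mathbf c)\}$ satisfies $|N_{\mathbf c}|\ge|\mathcal{L}(G)|\cdot|M(x_1,\dots,x_m;\mathbf 0)|/q^{mn}$, and let $C=\psi(N_{\mathbf c})\subseteq\mathbb{F}_q^n$. Then $$|C|\ge\Bigl\lceil\frac{|\mathcal{L}(G)|\cdot|M(x_1,\dots,x_m;\mathbf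 0)|}{q^{mn}}\Bigr\rceil\quad\text{and}\quad d(C)\ge(m+1)n+1-s-2\sum_{l=1}^m(l+1)\lfloor x_ln\rfloor.$$
   Context: $v_P$ is the normalized valuation at a place $P$, $v_P(D)$ the coefficient of $P$ in a divisor $D$, $\mathcal{L}(G)=\{f\in F: f=0\text{ or } v_P(f)\ge-v_P(G)\ \forall P\}$, $(f)_0$ the zero divisor of $f$. For a positive divisor $D$: $\overline D=\sum_{i=1}^n\min(m+1,v_{P_i}(D))P_i$; $j_\ell(D)=|\{i: v_{P_i}(D)=m-\ell\}|$ for $0\le\ell\le m$; $J_m(D)=\sum_{\ell=1}^m(\ell+1)j_\ell(D)$. For integers $r\ge s\ge0$ and integers $X_1,\dots,X_m\ge0$, $\mathcal{V}_m(r,s;X_1,\dots,X_m)$ is the set of positive divisors $D$ of $F$ with $\deg D=r$, $\deg\overline D\ge s$, $j_\ell(D)\le2X_\ell+\sum_{\nu=\ell+1}^mX_\nu$ for $1\le\ell\le m$, and $J_m(D)\le2\sum_{\ell=1}^m(\ell+1)X_\ell$. For $\boldsymbol\alpha=(\alpha^{(1)}_1,\dots,\alpha^{(1)}_m,\dots,\alpha^{(n)}_1,\dots,\alpha^{(n)}_m)\in\mathbb{F}_q^{mn}$ and $1\le\ell\le m$, $I_\ell(\boldsymbol\alpha)=\{i\in\{1,\dots,n\}:\alpha^{(i)}_m=\cdots=\alpha^{(i)}_{\ell+1}=0,\ \alpha^{(i)}_\ell\ne0\}$. For $\mathbf c\in\mathbb{F}_q^{mn}$, $M(x_1,\dots,x_m;\mathbf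 c)=\{\boldsymbol\alpha\in\mathbb{F}_q^{mn}:|I_\ell(\boldsymbol\alpha-\mathbf c)|\le\lfloor x_\ell n\rfloor\ \text{for }1\le\ell\le m\}$. For each $i$ let $t_i$ be a local parameter at $P_i$; each $f\in\mathcal{L}(G)$ has a local expansion $f=\sum_{l\ge0}f^{(l)}(P_i)t_i^l$ with $f^{(l)}(P_i)\in\mathbb{F}_q$. $\Phi:\mathcal{L}(G)\to\mathbb{F}_q^{mn}$, $\Phi(f)=(\phi_1(f),\dots,\phi_n(f))$ with $\phi_i(f)=(f^{(m-1)}(P_i),\dots,f^{(1)}(P_i),f^{(0)}(P_i))$; $\psi:\mathcal{L}(G)\to\mathbb{F}_q^n$, $\psi(f)=(f^{(m)}(P_1),\dots,f^{(m)}(P_n))$. $d(C)$ is the minimum Hamming distance of $C$. *)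

theory Defs
  imports "HOL-Computational_Algebra.Polynomial" "HOL-Library.Extended_Nat"
begin

text \<open>Setting: the function field F is the whole type 'a (a field); the constant
field F_q is a finite subfield K of it.  Places are represented by their
normalized discrete valuations v :: 'a \<Rightarrow> int (with the convention v 0 = 0;
0 is never evaluated meaningfully).\<close>

definition is_subfield :: "'a::field set \<Rightarrow> bool" where
  "is_subfield K \<longleftrightarrow> 0 \<in> K \<and> 1 \<in> K \<and>
     (\<forall>a\<in>K. \<forall>b\<in>K. a + b \<in> K \<and> a * b \<in> K \<and> - a \<in> K) \<and>
     (\<forall>a\<in>K. a \<noteq> 0 \<longrightarrow> inverse a \<in> K)"

definition algebraic_over :: "'a::field set \<Rightarrow> 'a \<Rightarrow> bool" where
  "algebraic_over K a \<longleftrightarrow> (\<exists>p. p \<noteq> 0 \<and> set (coeffs p) \<subseteq> K \<and> poly p a = 0)"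

definition rat_fun_field :: "'a::field set \<Rightarrow> 'a \<Rightarrow> 'a set" where
  "rat_fun_field K x = {poly a x / poly b x | a b.
      set (coeffs a) \<subseteq> K \<and> set (coeffs b) \<subseteq> K \<and> poly b x \<noteq> 0}"

definition global_function_field :: "'a::field set \<Rightarrow> bool" where
  "global_function_field K \<longleftrightarrow> finite K \<and> is_subfield K \<and>
     (\<exists>x. \<not> algebraic_over K x \<and>
        (\<exists>bs::'a list. \<forall>f. \<exists>cs. length cs = length bs \<and>
            set cs \<subseteq> rat_fun_field K x \<and> f = sum_list (map2 (*) cs bs))) \<and>
     (\<forall>a. algebraic_over K a \<longrightarrow> a \<in> K)"

definition normalized_valuation :: "'a::field set \<Rightarrow> ('a \<Rightarrow> int) \<Rightarrow> bool" where
  "normalized_valuation K v \<longleftrightarrow> v 0 = 0 \<and>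
     (\<forall>a b. a \<noteq> 0 \<longrightarrow> b \<noteq> 0 \<longrightarrow> v (a * b) = v a + v b) \<and>
     (\<forall>a b. a \<noteq> 0 \<longrightarrow> b \<noteq> 0 \<longrightarrow> a + b \<noteq> 0 \<longrightarrow> v (a + b) \<ge> min (v a) (v b)) \<and>
     (\<forall>a\<in>K. a \<noteq> 0 \<longrightarrow> v a = 0) \<and>
     (\<exists>z. z \<noteq> 0 \<and> v z = 1)"

definition in_valring :: "('a::field \<Rightarrow> int) \<Rightarrow> 'a \<Rightarrow> bool" where
  "in_valring v f \<longleftrightarrow> f = 0 \<or> v f \<ge> 0"

definition in_maxideal :: "('a::field \<Rightarrow> int) \<Rightarrow> 'a \<Rightarrow> bool" where
  "in_maxideal v f \<longleftrightarrow> f = 0 \<or> v f > 0"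

text \<open>Degree of a place: dimension of the residue field O_P/P over K
(minimal size of a K-spanning family of O_P modulo P).\<close>
definition place_degree :: "'a::field set \<Rightarrow> ('a \<Rightarrow> int) \<Rightarrow> nat" where
  "place_degree K v = (LEAST d. \<exists>bs. length bs = d \<and> (\<forall>b\<in>set bs. in_valring v b) \<and>
      (\<forall>f. in_valring v f \<longrightarrow> (\<exists>cs. length cs = d \<and> set cs \<subseteq> K \<and>
            in_maxideal v (f - sum_list (map2 (*) cs bs)))))"

definition rational_place :: "'a::field set \<Rightarrow> ('a \<Rightarrow> int) \<Rightarrow> bool" where
  "rational_place K v \<longleftrightarrow> normalized_valuation K v \<and> place_degree K v = 1"

definition is_divisor :: "'a::field set \<Rightarrow> (('a \<Rightarrow> int) \<Rightarrow> int) \<Rightarrow> bool" where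
  "is_divisor K D \<longleftrightarrow> finite {P. D P \<noteq> 0} \<and> (\<forall>P. D P \<noteq> 0 \<longrightarrow> normalized_valuation K P)"

definition div_deg :: "'a::field set \<Rightarrow> (('a \<Rightarrow> int) \<Rightarrow> int) \<Rightarrow> int" where
  "div_deg K D = (\<Sum>P\<in>{P. D P \<noteq> 0}. int (place_degree K P) * D P)"

definition positive_divisor :: "'a::field set \<Rightarrow> (('a \<Rightarrow> int) \<Rightarrow> int) \<Rightarrow> bool" where
  "positive_divisor K D \<longleftrightarrow> is_divisor K D \<and> (\<forall>P. D P \<ge> 0)"

definition principal_divisor :: "'a::field set \<Rightarrow> 'a \<Rightarrow> (('a \<Rightarrow> int) \<Rightarrow> int)" where
  "principal_divisor K f = (\<lambda>P. if normalized_valuation K P then P f else 0)"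

definition zero_divisor :: "'a::field set \<Rightarrow> 'a \<Rightarrow> (('a \<Rightarrow> int) \<Rightarrow> int)" where
  "zero_divisor K f = (\<lambda>P. if normalized_valuation K P then max 0 (P f) else 0)"

definition RR_space :: "'a::field set \<Rightarrow> (('a \<Rightarrow> int) \<Rightarrow> int) \<Rightarrow> 'a set" where
  "RR_space K G = {f. f = 0 \<or> (\<forall>P. normalized_valuation K P \<longrightarrow> P f \<ge> - G P)}"

definition class_number :: "'a::field set \<Rightarrow> nat" where
  "class_number K = card ({D. is_divisor K D \<and> div_deg K D = 0} //
      {(D, D'). is_divisor K D \<and> is_divisor K D' \<and> div_deg K D = 0 \<and> div_deg K D' = 0 \<and>
         (\<exists>f. f \<noteq> 0 \<and> (\<lambda>P. D P - D' P) = principal_divisor K f)})"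

definition div_bar :: "(nat \<Rightarrow> ('a \<Rightarrow> int)) \<Rightarrow> nat \<Rightarrow> nat \<Rightarrow> (('a \<Rightarrow> int) \<Rightarrow> int)
    \<Rightarrow> (('a \<Rightarrow> int) \<Rightarrow> int)" where
  "div_bar Pl n m D = (\<lambda>Q. if \<exists>i\<in>{1..n}. Q = Pl i then min (int m + 1) (D Q) else 0)"

definition j_ell :: "(nat \<Rightarrow> ('a \<Rightarrow> int)) \<Rightarrow> nat \<Rightarrow> nat \<Rightarrow> nat \<Rightarrow> (('a \<Rightarrow> int) \<Rightarrow> int) \<Rightarrow> nat" where
  "j_ell Pl n m l D = card {i\<in>{1..n}. D (Pl i) = int m - int l}"

definition J_m :: "(nat \<Rightarrow> ('a \<Rightarrow> int)) \<Rightarrow> nat \<Rightarrow> nat \<Rightarrow> (('a \<Rightarrow> int) \<Rightarrow> int) \<Rightarrow> nat" where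
  "J_m Pl n m D = (\<Sum>l=1..m. (l + 1) * j_ell Pl n m l D)"

definition V_set :: "'a::field set \<Rightarrow> (nat \<Rightarrow> ('a \<Rightarrow> int)) \<Rightarrow> nat \<Rightarrow> nat \<Rightarrow> nat \<Rightarrow> nat
    \<Rightarrow> (nat \<Rightarrow> nat) \<Rightarrow> (('a \<Rightarrow> int) \<Rightarrow> int) set" where
  "V_set K Pl n m r s X = {D. positive_divisor K D \<and> div_deg K D = int r \<and>
      div_deg K (div_bar Pl n m D) \<ge> int s \<and>
      (\<forall>l\<in>{1..m}. j_ell Pl n m l D \<le> 2 * X l + (\<Sum>\<nu>=l+1..m. X \<nu>)) \<and>
      J_m Pl n m D \<le> 2 * (\<Sum>l=1..m. (l + 1) * X l)}"

text \<open>Local expansions at a rational place v with local parameter t: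
f = \<Sum>_l f^(l) t^l.  The residue of f is the unique constant a \<in> K with
f - a \<in> P.\<close>
definition residue :: "'a::field set \<Rightarrow> ('a \<Rightarrow> int) \<Rightarrow> 'a \<Rightarrow> 'a" where
  "residue K v f = (THE a. a \<in> K \<and> in_maxideal v (f - a))"

primrec loc_coeff :: "'a::field set \<Rightarrow> ('a \<Rightarrow> int) \<Rightarrow> 'a \<Rightarrow> 'a \<Rightarrow> nat \<Rightarrow> 'a" where
  "loc_coeff K v t f 0 = residue K v f"
| "loc_coeff K v t f (Suc l) = loc_coeff K v t ((f - residue K v f) / t) l"

text \<open>Vectors of F_q^{mn}: alpha i k = alpha^{(i)}_k, i \<in> {1..n}, k \<in> {1..m}
(zero outside).\<close>
definition vecs :: "'a::field set \<Rightarrow> nat \<Rightarrow> nat \<Rightarrow> (nat \<Rightarrow> nat \<Rightarrow> 'a) set" where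
  "vecs K n m = {\<alpha>. (\<forall>i k. \<alpha> i k \<in> K) \<and>
      (\<forall>i k. \<not> (i \<in> {1..n} \<and> k \<in> {1..m}) \<longrightarrow> \<alpha> i k = 0)}"

definition I_ell :: "nat \<Rightarrow> nat \<Rightarrow> nat \<Rightarrow> (nat \<Rightarrow> nat \<Rightarrow> 'a::field) \<Rightarrow> nat set" where
  "I_ell n m l \<alpha> = {i\<in>{1..n}. (\<forall>k\<in>{l+1..m}. \<alpha> i k = 0) \<and> \<alpha> i l \<noteq> 0}"

definition M_set :: "'a::field set \<Rightarrow> nat \<Rightarrow> nat \<Rightarrow> (nat \<Rightarrow> real) \<Rightarrow> (nat \<Rightarrow> nat \<Rightarrow> 'a)
    \<Rightarrow> (nat \<Rightarrow> nat \<Rightarrow> 'a) set" where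
  "M_set K n m x c = {\<alpha>\<in>vecs K n m. \<forall>l\<in>{1..m}.
      int (card (I_ell n m l (\<lambda>i k. \<alpha> i k - c i k))) \<le> \<lfloor>x l * real n\<rfloor>}"

definition Phi :: "'a::field set \<Rightarrow> (nat \<Rightarrow> ('a \<Rightarrow> int)) \<Rightarrow> (nat \<Rightarrow> 'a) \<Rightarrow> nat \<Rightarrow> nat \<Rightarrow> 'a
    \<Rightarrow> (nat \<Rightarrow> nat \<Rightarrow> 'a)" where
  "Phi K Pl t n m f = (\<lambda>i k. if i \<in> {1..n} \<and> k \<in> {1..m}
      then loc_coeff K (Pl i) (t i) f (m - k) else 0)"

definition psi :: "'a::field set \<Rightarrow> (nat \<Rightarrow> ('a \<Rightarrow> int)) \<Rightarrow> (nat \<Rightarrow> 'a) \<Rightarrow> nat \<Rightarrow> nat \<Rightarrow> 'a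
    \<Rightarrow> (nat \<Rightarrow> 'a)" where
  "psi K Pl t n m f = (\<lambda>i. if i \<in> {1..n} then loc_coeff K (Pl i) (t i) f m else 0)"

definition hamming :: "nat \<Rightarrow> (nat \<Rightarrow> 'a) \<Rightarrow> (nat \<Rightarrow> 'a) \<Rightarrow> nat" where
  "hamming n u v = card {i\<in>{1..n}. u i \<noteq> v i}"

text \<open>Minimum distance (\<infinity> if the code has fewer than two words).\<close>
definition min_dist :: "nat \<Rightarrow> (nat \<Rightarrow> 'a) set \<Rightarrow> enat" where
  "min_dist n C = (INF p\<in>{(u, v). u \<in> C \<and> v \<in> C \<and> u \<noteq> v}. enat (hamming n (fst p) (snd p)))"

definition flx :: "(nat \<Rightarrow> real) \<Rightarrow> nat \<Rightarrow> nat \<Rightarrow> nat" where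
  "flx x n l = nat \<lfloor>x l * real n\<rfloor>"

end

theory Submission
  imports Defs
begin

text \<open>Two distinct \<open>f, g \<in> N_c\<close> have expansion vectors \<open>\<Phi> f, \<Phi> g\<close> in the same translate of
  \<open>M\<close>, so the leading levels of \<open>\<Phi> (f - g) = \<Phi> f - \<Phi> g\<close> are controlled by those of
  \<open>\<Phi> f - c\<close> and \<open>\<Phi> g - c\<close>. Since the leading level of \<open>\<Phi> h\<close> at \<open>P_i\<close> is \<open>m\<close> minus the
  order of \<open>h\<close> at \<open>P_i\<close>, the zero divisor \<open>E\<close> of \<open>h = f - g\<close> satisfies the bounds on
  \<open>j_\<ell>\<close> and \<open>J_m\<close> in the hypothesis on \<open>G\<close>, whence \<open>deg (div_bar E) \<le> s - 1\<close>. Every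
  \<open>P_i\<close> contributes at least \<open>m + 1\<close> to \<open>#{i. v_P_i h = m} + J_m E + deg (div_bar E)\<close>,
  and at the \<open>P_i\<close> where \<open>h\<close> has order exactly \<open>m\<close> the \<open>m\<close>-th coefficients of \<open>f\<close> and
  \<open>g\<close> differ. Hence \<open>\<psi>\<close> separates \<open>N_c\<close> with the stated distance, and \<open>|C| = |N_c|\<close>.

  Most of the work is the existence of local expansions: at a rational place every integral
  element is congruent to a constant. This follows from the finiteness of the residue field
  over \<open>K\<close>, which holds because \<open>F\<close> is finite-dimensional over \<open>K(w)\<close> for some \<open>w\<close> of positive
  valuation, and integral elements of \<open>K(w)\<close> are congruent to constants.\<close>

section \<open>Subfields and discrete valuations\<close>

lemma subfield_zero: "is_subfield L \<Longrightarrow> 0 \<in> L"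
  and subfield_one: "is_subfield L \<Longrightarrow> 1 \<in> L"
  unfolding is_subfield_def by auto

lemma subfield_add: "is_subfield L \<Longrightarrow> a \<in> L \<Longrightarrow> b \<in> L \<Longrightarrow> a + b \<in> L"
  and subfield_mult: "is_subfield L \<Longrightarrow> a \<in> L \<Longrightarrow> b \<in> L \<Longrightarrow> a * b \<in> L"
  and subfield_uminus: "is_subfield L \<Longrightarrow> a \<in> L \<Longrightarrow> - a \<in> L"
  unfolding is_subfield_def by auto

lemma subfield_inverse: "is_subfield L \<Longrightarrow> a \<in> L \<Longrightarrow> inverse a \<in> L"
  unfolding is_subfield_def by (cases "a = 0") auto

lemma subfield_diff: "is_subfield L \<Longrightarrow> a \<in> L \<Longrightarrow> b \<in> L \<Longrightarrow> a - b \<in> L"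
  by (metis diff_conv_add_uminus subfield_add subfield_uminus)

lemma subfield_divide: "is_subfield L \<Longrightarrow> a \<in> L \<Longrightarrow> b \<in> L \<Longrightarrow> a / b \<in> L"
  by (simp add: divide_inverse subfield_mult subfield_inverse)

lemma subfield_power: "is_subfield L \<Longrightarrow> a \<in> L \<Longrightarrow> a ^ k \<in> L"
  by (induction k) (auto simp: subfield_mult subfield_one)

lemma subfield_sum:
  "is_subfield L \<Longrightarrow> (\<And>i. i \<in> A \<Longrightarrow> f i \<in> L) \<Longrightarrow> (\<Sum>i\<in>A. f i) \<in> L"
  by (induction A rule: infinite_finite_induct) (auto simp: subfield_add subfield_zero)

locale discrete_valuation =
  fixes K :: "'a::field set" and v :: "'a \<Rightarrow> int"
  assumes subfield: "is_subfield K" and normalized: "normalized_valuation K v"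
begin

lemma val_zero: "v 0 = 0"
  and val_mult: "a \<noteq> 0 \<Longrightarrow> b \<noteq> 0 \<Longrightarrow> v (a * b) = v a + v b"
  and val_add: "a \<noteq> 0 \<Longrightarrow> b \<noteq> 0 \<Longrightarrow> a + b \<noteq> 0 \<Longrightarrow> min (v a) (v b) \<le> v (a + b)"
  and val_const: "a \<in> K \<Longrightarrow> a \<noteq> 0 \<Longrightarrow> v a = 0"
  and exists_uniformizer: "\<exists>z. z \<noteq> 0 \<and> v z = 1"
  using normalized unfolding normalized_valuation_def by blast+

lemma val_one: "v 1 = 0"
  using val_mult[of 1 1] by simp

lemma val_uminus: "v (- a) = v a"
proof -
  have "v (-1) = 0" using val_mult[of "-1" "-1"] val_one by simp
  then show ?thesis using val_mult[of "-1" a] val_zero by (cases "a = 0") auto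
qed

lemma val_inverse: "a \<noteq> 0 \<Longrightarrow> v (inverse a) = - v a"
  using val_mult[of a "inverse a"] val_one by simp

lemma val_divide: "a \<noteq> 0 \<Longrightarrow> b \<noteq> 0 \<Longrightarrow> v (a / b) = v a - v b"
  by (simp add: divide_inverse val_mult val_inverse)

lemma val_diff: "a \<noteq> 0 \<Longrightarrow> b \<noteq> 0 \<Longrightarrow> a - b \<noteq> 0 \<Longrightarrow> min (v a) (v b) \<le> v (a - b)"
  using val_add[of a "- b"] val_uminus by simp

lemma val_power: "a \<noteq> 0 \<Longrightarrow> v (a ^ k) = int k * v a"
  by (induction k) (auto simp: val_one val_mult algebra_simps)

lemma val_add_eq_left:
  assumes "a \<noteq> 0" "b \<noteq> 0" "v a < v b"
  shows "a + b \<noteq> 0" and "v (a + b) = v a"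
proof -
  show ne: "a + b \<noteq> 0"
  proof
    assume "a + b = 0"
    then have "b = - a" by (simp add: eq_neg_iff_add_eq_0 add.commute)
    then show False using assms(3) val_uminus by simp
  qed
  have "v a \<le> v (a + b)" using val_add[OF assms(1,2) ne] assms(3) by simp
  moreover have "min (v (a + b)) (v b) \<le> v a" using val_diff[of "a + b" b] ne assms by simp
  ultimately show "v (a + b) = v a" using assms(3) by linarith
qed

lemma valring_add:
  assumes "in_valring v a" "in_valring v b" shows "in_valring v (a + b)"
proof (cases "a = 0 \<or> b = 0 \<or> a + b = 0")
  case False
  then show ?thesis using assms val_add[of a b] by (auto simp: in_valring_def)
qed (use assms in \<open>auto simp: in_valring_def\<close>)

lemma valring_uminus: "in_valring v a \<Longrightarrow> in_valring v (- a)"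
  unfolding in_valring_def using val_uminus by auto

lemma valring_diff: "in_valring v a \<Longrightarrow> in_valring v b \<Longrightarrow> in_valring v (a - b)"
  by (metis diff_conv_add_uminus valring_add valring_uminus)

lemma valring_mult: "in_valring v a \<Longrightarrow> in_valring v b \<Longrightarrow> in_valring v (a * b)"
  unfolding in_valring_def by (cases "a = 0 \<or> b = 0") (auto simp: val_mult)

lemma valring_const: "a \<in> K \<Longrightarrow> in_valring v a"
  unfolding in_valring_def by (cases "a = 0") (auto simp: val_const)

lemma valring_power: "in_valring v a \<Longrightarrow> in_valring v (a ^ k)"
  by (induction k) (auto intro: valring_mult valring_const subfield_one[OF subfield])

lemma valring_sum: "(\<And>i. i \<in> A \<Longrightarrow> in_valring v (f i)) \<Longrightarrow> in_valring v (\<Sum>i\<in>A. f i)"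
  by (induction A rule: infinite_finite_induct) (simp_all add: valring_add in_valring_def[of v 0])

lemma maxideal_imp_valring: "in_maxideal v a \<Longrightarrow> in_valring v a"
  unfolding in_maxideal_def in_valring_def by auto

lemma maxideal_add:
  assumes "in_maxideal v a" "in_maxideal v b" shows "in_maxideal v (a + b)"
proof (cases "a = 0 \<or> b = 0 \<or> a + b = 0")
  case False
  then show ?thesis using assms val_add[of a b] by (auto simp: in_maxideal_def)
qed (use assms in \<open>auto simp: in_maxideal_def\<close>)

lemma maxideal_uminus: "in_maxideal v a \<Longrightarrow> in_maxideal v (- a)"
  unfolding in_maxideal_def using val_uminus by auto

lemma maxideal_diff: "in_maxideal v a \<Longrightarrow> in_maxideal v b \<Longrightarrow> in_maxideal v (a - b)"
  by (metis diff_conv_add_uminus maxideal_add maxideal_uminus)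

lemma maxideal_mult: "in_valring v a \<Longrightarrow> in_maxideal v b \<Longrightarrow> in_maxideal v (a * b)"
  unfolding in_maxideal_def in_valring_def by (cases "a = 0 \<or> b = 0") (auto simp: val_mult)

lemma maxideal_sum: "(\<And>i. i \<in> A \<Longrightarrow> in_maxideal v (f i)) \<Longrightarrow> in_maxideal v (\<Sum>i\<in>A. f i)"
  by (induction A rule: infinite_finite_induct) (simp_all add: maxideal_add in_maxideal_def[of v 0])

lemma const_not_maxideal: "a \<in> K \<Longrightarrow> a \<noteq> 0 \<Longrightarrow> \<not> in_maxideal v a"
  unfolding in_maxideal_def using val_const by auto

lemma residue_unique:
  assumes "a \<in> K" "b \<in> K" "in_maxideal v (f - a)" "in_maxideal v (f - b)"
  shows "a = b"
  using maxideal_diff[OF assms(4,3)] const_not_maxideal[OF subfield_diff[OF subfield assms(1,2)]]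
  by auto

lemma sum_val_gt:
  assumes "\<And>i. i \<in> A \<Longrightarrow> f i = 0 \<or> \<mu> < v (f i)"
  shows "(\<Sum>i\<in>A. f i) = 0 \<or> \<mu> < v (\<Sum>i\<in>A. f i)"
  using assms
proof (induction A rule: infinite_finite_induct)
  case (insert x F)
  then have x: "f x = 0 \<or> \<mu> < v (f x)" and F: "sum f F = 0 \<or> \<mu> < v (sum f F)"
    by auto
  show ?case
  proof (cases "f x = 0 \<or> sum f F = 0 \<or> f x + sum f F = 0")
    case True
    then show ?thesis using insert(1,2) x F by auto
  next
    case False
    then show ?thesis using insert(1,2) x F val_add[of "f x" "sum f F"] by auto
  qed
qed auto

text \<open>The term of least valuation cannot be cancelled by the others.\<close>
lemma sum_nonzero_if_distinct_vals:
  assumes "finite A" "A \<noteq> {}" "\<And>i. i \<in> A \<Longrightarrow> f i \<noteq> 0"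
    and "\<And>i j. i \<in> A \<Longrightarrow> j \<in> A \<Longrightarrow> i \<noteq> j \<Longrightarrow> v (f i) \<noteq> v (f j)"
  shows "(\<Sum>i\<in>A. f i) \<noteq> 0"
proof -
  obtain i0 where i0: "i0 \<in> A" "\<And>j. j \<in> A \<Longrightarrow> v (f i0) \<le> v (f j)"
    using ex_is_arg_min_if_finite[OF assms(1,2), of "\<lambda>i. v (f i)"]
    unfolding is_arg_min_def by (auto simp: not_less)
  have rest: "(\<Sum>i\<in>A-{i0}. f i) = 0 \<or> v (f i0) < v (\<Sum>i\<in>A-{i0}. f i)"
  proof (rule sum_val_gt)
    fix i assume "i \<in> A - {i0}"
    then show "f i = 0 \<or> v (f i0) < v (f i)"
      using i0 assms(4)[of i i0] by force
  qed
  have "(\<Sum>i\<in>A. f i) = f i0 + (\<Sum>i\<in>A-{i0}. f i)"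
    using i0(1) assms(1) by (simp add: sum.remove)
  then show ?thesis
    using rest val_add_eq_left(1)[of "f i0" "\<Sum>i\<in>A-{i0}. f i"] assms(3)[OF i0(1)]
    by (cases "(\<Sum>i\<in>A-{i0}. f i) = 0") auto
qed

end

section \<open>Linear algebra over a subfield\<close>

lemma sum_list_map2_times:
  "length cs = length bs \<Longrightarrow> sum_list (map2 (*) cs bs) = (\<Sum>i<length bs. cs ! i * bs ! i)"
  by (simp add: sum_list_sum_nth atLeast0LessThan)

definition span_over :: "'a::field set \<Rightarrow> ('i \<Rightarrow> 'a) \<Rightarrow> 'i set \<Rightarrow> 'a set" where
  "span_over L B I = {y. \<exists>c. (\<forall>i\<in>I. c i \<in> L) \<and> y = (\<Sum>i\<in>I. c i * B i)}"

context
  fixes L :: "'a::field set"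
  assumes L: "is_subfield L"
begin

lemma span_over_zero: "0 \<in> span_over L B I"
  unfolding span_over_def by (intro CollectI exI[of _ "\<lambda>_. 0"]) (simp add: subfield_zero[OF L])

lemma span_over_add:
  assumes "a \<in> span_over L B I" "b \<in> span_over L B I"
  shows "a + b \<in> span_over L B I"
proof -
  obtain c d where "\<forall>i\<in>I. c i \<in> L" "a = (\<Sum>i\<in>I. c i * B i)"
    and "\<forall>i\<in>I. d i \<in> L" "b = (\<Sum>i\<in>I. d i * B i)"
    using assms unfolding span_over_def by auto
  then show ?thesis
    unfolding span_over_def
    by (intro CollectI exI[of _ "\<lambda>i. c i + d i"])
      (auto simp: subfield_add[OF L] sum.distrib algebra_simps)
qed

lemma span_over_scale:
  assumes "a \<in> span_over L B I" "k \<in> L"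
  shows "k * a \<in> span_over L B I"
proof -
  obtain c where "\<forall>i\<in>I. c i \<in> L" "a = (\<Sum>i\<in>I. c i * B i)"
    using assms(1) unfolding span_over_def by auto
  then show ?thesis
    unfolding span_over_def using assms(2)
    by (intro CollectI exI[of _ "\<lambda>i. k * c i"])
      (auto simp: subfield_mult[OF L] sum_distrib_left algebra_simps)
qed

lemma span_over_diff:
  assumes "a \<in> span_over L B I" "b \<in> span_over L B I"
  shows "a - b \<in> span_over L B I"
  using span_over_add[OF assms(1) span_over_scale[OF assms(2), of "-1"]]
    subfield_uminus[OF L subfield_one[OF L]]
  by simp

lemma span_over_sum:
  "(\<And>j. j \<in> A \<Longrightarrow> f j \<in> span_over L B I) \<Longrightarrow> (\<Sum>j\<in>A. f j) \<in> span_over L B I"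
  by (induction A rule: infinite_finite_induct) (simp_all add: span_over_add span_over_zero)

lemma span_over_basis:
  assumes "finite I" "i \<in> I"
  shows "B i \<in> span_over L B I"
  unfolding span_over_def using assms subfield_zero[OF L] subfield_one[OF L]
  by (intro CollectI exI[of _ "\<lambda>j. of_bool (j = i)"]) simp

lemma span_over_insert:
  assumes "finite I" "b \<notin> I" "y \<in> span_over L B (insert b I)"
  shows "\<exists>a\<in>L. y - a * B b \<in> span_over L B I"
proof -
  obtain c where c: "\<forall>i\<in>insert b I. c i \<in> L" "y = (\<Sum>i\<in>insert b I. c i * B i)"
    using assms(3) unfolding span_over_def by blast
  then have "y - c b * B b = (\<Sum>i\<in>I. c i * B i)" using assms(1,2) by simp
  then show ?thesis using c(1) unfolding span_over_def by auto
qed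

lemma linear_relation_lift:
  assumes "finite J" "j0 \<in> J" "\<forall>j\<in>J. d j \<in> L"
    and c: "\<forall>j\<in>J-{j0}. c j \<in> L" "\<exists>j\<in>J-{j0}. c j \<noteq> 0"
      "(\<Sum>j\<in>J-{j0}. c j * (y j - d j * y j0)) = 0"
  shows "\<exists>c. (\<forall>j\<in>J. c j \<in> L) \<and> (\<exists>j\<in>J. c j \<noteq> 0) \<and> (\<Sum>j\<in>J. c j * y j) = 0"
proof -
  define c' where "c' = c(j0 := - (\<Sum>j\<in>J-{j0}. c j * d j))"
  have "(\<Sum>j\<in>J. c' j * y j) = c' j0 * y j0 + (\<Sum>j\<in>J-{j0}. c j * y j)"
    using assms(1,2) by (simp add: sum.remove c'_def)
  also have "\<dots> = (\<Sum>j\<in>J-{j0}. c j * (y j - d j * y j0))"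
    by (simp add: c'_def algebra_simps sum_subtractf sum_distrib_left sum_distrib_right)
  finally have "(\<Sum>j\<in>J. c' j * y j) = 0" using c(3) by simp
  moreover have "(\<Sum>j\<in>J-{j0}. c j * d j) \<in> L"
    using assms(3) c(1) by (intro subfield_sum[OF L] subfield_mult[OF L]) auto
  then have "\<forall>j\<in>J. c' j \<in> L" using c(1) by (simp add: c'_def subfield_uminus[OF L])
  moreover have "\<exists>j\<in>J. c' j \<noteq> 0" using c(2) by (auto simp: c'_def)
  ultimately show ?thesis by blast
qed

lemma span_over_dependent:
  assumes "finite I" "finite J" "card I < card J" "\<forall>j\<in>J. y j \<in> span_over L B I"
  shows "\<exists>c. (\<forall>j\<in>J. c j \<in> L) \<and> (\<exists>j\<in>J. c j \<noteq> 0) \<and> (\<Sum>j\<in>J. c j * y j) = 0"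
  using assms
proof (induction I arbitrary: J y rule: finite_induct)
  case empty
  then obtain j0 where j0: "j0 \<in> J" by fastforce
  have "y j0 = 0" using empty j0 by (simp add: span_over_def)
  show ?case
  proof (intro exI[of _ "\<lambda>j. of_bool (j = j0)"] conjI)
    show "\<forall>j\<in>J. of_bool (j = j0) \<in> L" using subfield_zero[OF L] subfield_one[OF L] by simp
    show "\<exists>j\<in>J. of_bool (j = j0) \<noteq> (0::'a)" using j0 by auto
    show "(\<Sum>j\<in>J. of_bool (j = j0) * y j) = 0"
      using \<open>y j0 = 0\<close> j0 empty.prems(1) by simp
  qed
next
  case (insert b I)
  have "\<exists>a\<in>L. y j - a * B b \<in> span_over L B I" if "j \<in> J" for j
    using span_over_insert[OF insert.hyps] insert.prems(3) that by simp
  then obtain a where a: "\<And>j. j \<in> J \<Longrightarrow> a j \<in> L"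
    "\<And>j. j \<in> J \<Longrightarrow> y j - a j * B b \<in> span_over L B I"
    by metis
  have card: "card I < card J" using insert.hyps insert.prems(2) by simp
  show ?case
  proof (cases "\<forall>j\<in>J. a j = 0")
    case True
    then have "\<forall>j\<in>J. y j \<in> span_over L B I" using a(2) by simp
    then show ?thesis using insert.IH[OF insert.prems(1) card] by blast
  next
    case False
    then obtain j0 where j0: "j0 \<in> J" "a j0 \<noteq> 0" by blast
    define d where "d j = a j / a j0" for j
    have d: "\<forall>j\<in>J. d j \<in> L" using a(1) j0(1) subfield_divide[OF L] by (simp add: d_def)
    have "y j - d j * y j0 \<in> span_over L B I" if "j \<in> J - {j0}" for j
    proof -
      have eq: "y j - d j * y j0 = (y j - a j * B b) - d j * (y j0 - a j0 * B b)"
        using j0(2) by (simp add: d_def field_simps)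
      show ?thesis
        unfolding eq using that j0(1) d by (intro span_over_diff a(2) span_over_scale) auto
    qed
    moreover have "card I < card (J - {j0})"
      using insert.hyps insert.prems(1,2) j0(1) by simp
    ultimately obtain c where "\<forall>j\<in>J-{j0}. c j \<in> L" "\<exists>j\<in>J-{j0}. c j \<noteq> 0"
      "(\<Sum>j\<in>J-{j0}. c j * (y j - d j * y j0)) = 0"
      using insert.IH[of "J - {j0}" "\<lambda>j. y j - d j * y j0"] insert.prems(1) by blast
    then show ?thesis using linear_relation_lift[OF insert.prems(1) j0(1) d] by blast
  qed
qed

lemma span_over_trans:
  assumes "finite I" "finite J" "M \<subseteq> span_over L C J"
  shows "span_over M B I \<subseteq> span_over L (\<lambda>(i, j). C j * B i) (I \<times> J)"
proof
  fix y assume "y \<in> span_over M B I"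
  then obtain c where c: "\<forall>i\<in>I. c i \<in> M" "y = (\<Sum>i\<in>I. c i * B i)"
    unfolding span_over_def by blast
  show "y \<in> span_over L (\<lambda>(i, j). C j * B i) (I \<times> J)"
    unfolding c(2)
  proof (rule span_over_sum)
    fix i assume i: "i \<in> I"
    obtain d where d: "\<forall>j\<in>J. d j \<in> L" "c i = (\<Sum>j\<in>J. d j * C j)"
      using c(1) i assms(3) unfolding span_over_def by blast
    have "c i * B i = (\<Sum>j\<in>J. d j * (\<lambda>(i, j). C j * B i) (i, j))"
      by (simp add: d(2) sum_distrib_right mult.assoc)
    also have "\<dots> \<in> span_over L (\<lambda>(i, j). C j * B i) (I \<times> J)"
      using assms(1,2) i d(1)
      by (intro span_over_sum span_over_scale span_over_basis) auto
    finally show "c i * B i \<in> span_over L (\<lambda>(i, j). C j * B i) (I \<times> J)" .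
  qed
qed

end

section \<open>Polynomials and rational function fields\<close>

definition poly_over :: "'a::zero set \<Rightarrow> 'a poly \<Rightarrow> bool" where
  "poly_over L p \<longleftrightarrow> (\<forall>i. coeff p i \<in> L)"

lemma coeffs_subset_iff_poly_over:
  assumes "0 \<in> L"
  shows "set (coeffs p) \<subseteq> L \<longleftrightarrow> poly_over L p"
proof
  assume coeffs: "set (coeffs p) \<subseteq> L"
  have "coeff p i \<in> L" for i
  proof (cases "coeff p i = 0")
    case False
    then have "coeff p i \<in> set (coeffs p)" by (auto intro: coeff_in_coeffs le_degree)
    then show ?thesis using coeffs by blast
  qed (use assms in simp)
  then show "poly_over L p" by (simp add: poly_over_def)
next
  assume "poly_over L p"
  then show "set (coeffs p) \<subseteq> L" unfolding poly_over_def coeffs_def by auto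
qed

lemma poly_over_pCons [simp]: "poly_over L (pCons a p) \<longleftrightarrow> a \<in> L \<and> poly_over L p"
proof
  assume "poly_over L (pCons a p)"
  then show "a \<in> L \<and> poly_over L p" unfolding poly_over_def by (metis coeff_pCons_0 coeff_pCons_Suc)
qed (auto simp: poly_over_def coeff_pCons split: nat.split)

lemma poly_over_zero: "0 \<in> L \<Longrightarrow> poly_over L 0"
  by (simp add: poly_over_def)

lemma poly_over_mono: "L \<subseteq> M \<Longrightarrow> poly_over L p \<Longrightarrow> poly_over M p"
  unfolding poly_over_def by blast

context
  fixes L :: "'a::field set"
  assumes L: "is_subfield L"
begin

lemma poly_over_add: "poly_over L p \<Longrightarrow> poly_over L q \<Longrightarrow> poly_over L (p + q)"
  and poly_over_uminus: "poly_over L p \<Longrightarrow> poly_over L (- p)"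
  and poly_over_diff: "poly_over L p \<Longrightarrow> poly_over L q \<Longrightarrow> poly_over L (p - q)"
  and poly_over_smult: "a \<in> L \<Longrightarrow> poly_over L p \<Longrightarrow> poly_over L (smult a p)"
  unfolding poly_over_def
  by (simp_all add: subfield_add[OF L] subfield_uminus[OF L] subfield_diff[OF L]
      subfield_mult[OF L])

lemma poly_over_mult: "poly_over L p \<Longrightarrow> poly_over L q \<Longrightarrow> poly_over L (p * q)"
  unfolding poly_over_def coeff_mult by (auto intro!: subfield_sum[OF L] subfield_mult[OF L])

lemma poly_in_subfield: "poly_over L p \<Longrightarrow> y \<in> L \<Longrightarrow> poly p y \<in> L"
  unfolding poly_altdef poly_over_def
  by (auto intro!: subfield_sum[OF L] subfield_mult[OF L] subfield_power[OF L])

end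

lemma poly_over_factor_power:
  fixes p :: "'a::field poly"
  assumes "poly_over L p" "p \<noteq> 0"
  shows "\<exists>k p1. poly_over L p1 \<and> coeff p1 0 \<noteq> 0 \<and> (\<forall>w. poly p w = w ^ k * poly p1 w)"
  using assms
proof (induction p rule: pCons_induct)
  case (pCons a p)
  show ?case
  proof (cases "a = 0")
    case False
    then show ?thesis using pCons.prems by (intro exI[of _ "0::nat"] exI[of _ "pCons a p"]) auto
  next
    case True
    with pCons.prems have "poly_over L p" "p \<noteq> 0" by auto
    then obtain k p1 where "poly_over L p1" "coeff p1 0 \<noteq> 0" "\<forall>w. poly p w = w ^ k * poly p1 w"
      using pCons.IH by blast
    then show ?thesis using True by (intro exI[of _ "Suc k"] exI[of _ p1]) simp
  qed
qed simp

lemma inverse_eq_poly_if_root: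
  assumes L: "is_subfield L" and p: "poly_over L p" "p \<noteq> 0" "poly p s = 0" and "s \<noteq> 0"
  shows "\<exists>q. poly_over L q \<and> inverse s = poly q s"
proof -
  obtain k p1 where p1: "poly_over L p1" "coeff p1 0 \<noteq> 0" "poly p s = s ^ k * poly p1 s"
    using poly_over_factor_power[OF p(1,2)] by blast
  obtain a q where q: "p1 = pCons a q" by (metis pCons_cases)
  have a: "a \<in> L" "a \<noteq> 0" "poly_over L q" using p1(1,2) q by auto
  have "a + s * poly q s = 0" using p1(3) p(3) \<open>s \<noteq> 0\<close> q by simp
  then have "inverse s = poly (smult (- inverse a) q) s"
    using a(2) \<open>s \<noteq> 0\<close> by (simp add: field_simps add_eq_0_iff2)
  moreover have "poly_over L (smult (- inverse a) q)"
    using a by (intro poly_over_smult[OF L] subfield_uminus[OF L] subfield_inverse[OF L])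
  ultimately show ?thesis by blast
qed

lemma poly_root_if_powers_in_span:
  assumes L: "is_subfield L" and "finite I" "\<forall>k. s ^ k \<in> span_over L B I"
  shows "\<exists>p. poly_over L p \<and> p \<noteq> 0 \<and> poly p s = 0"
proof -
  have "card I < card {..card I}" by simp
  moreover have "\<forall>k\<in>{..card I}. s ^ k \<in> span_over L B I" using assms(3) by blast
  ultimately obtain c where c: "\<forall>k\<in>{..card I}. c k \<in> L" "\<exists>k\<in>{..card I}. c k \<noteq> 0"
    "(\<Sum>k\<in>{..card I}. c k * s ^ k) = 0"
    using span_over_dependent[OF L assms(2) finite_atMost] by blast
  define p where "p = (\<Sum>k\<in>{..card I}. monom (c k) k)"
  have coeff_p: "coeff p i = (if i \<le> card I then c i else 0)" for i
    by (simp add: p_def coeff_sum coeff_monom)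
  obtain k where "k \<le> card I" "c k \<noteq> 0" using c(2) by auto
  then have "p \<noteq> 0" using coeff_p[of k] by auto
  moreover have "poly_over L p" using c(1) subfield_zero[OF L] by (simp add: poly_over_def coeff_p)
  moreover have "poly p s = 0" using c(3) by (simp add: p_def poly_sum poly_monom)
  ultimately show ?thesis by blast
qed

lemma power_degree_eq_if_root:
  fixes p :: "'a::field poly"
  assumes "p \<noteq> 0" "poly p x = 0"
  shows "x ^ degree p = (\<Sum>j<degree p. (- coeff p j / lead_coeff p) * x ^ j)"
proof -
  have "{..degree p} = insert (degree p) {..<degree p}" by auto
  then have "lead_coeff p * x ^ degree p = - (\<Sum>j<degree p. coeff p j * x ^ j)"
    using assms(2) by (simp add: poly_altdef eq_neg_iff_add_eq_0)
  then have "x ^ degree p = - (\<Sum>j<degree p. coeff p j * x ^ j) / lead_coeff p"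
    using assms(1) by (simp add: field_simps)
  then show ?thesis by (simp add: sum_divide_distrib sum_negf)
qed

context
  fixes K :: "'a::field set"
  assumes K: "is_subfield K"
begin

lemma rat_fun_field_iff:
  "z \<in> rat_fun_field K x \<longleftrightarrow>
     (\<exists>a b. poly_over K a \<and> poly_over K b \<and> poly b x \<noteq> 0 \<and> z = poly a x / poly b x)"
  unfolding rat_fun_field_def using coeffs_subset_iff_poly_over[OF subfield_zero[OF K]] by auto

lemma subset_rat_fun_field: "K \<subseteq> rat_fun_field K x"
proof
  fix a assume "a \<in> K"
  then show "a \<in> rat_fun_field K x"
    unfolding rat_fun_field_iff
    by (intro exI[of _ "[:a:]"] exI[of _ 1])
      (simp add: one_pCons poly_over_zero subfield_zero[OF K] subfield_one[OF K])
qed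

lemma generator_in_rat_fun_field: "x \<in> rat_fun_field K x"
  unfolding rat_fun_field_iff
  by (intro exI[of _ "[:0, 1:]"] exI[of _ 1])
    (simp add: one_pCons poly_over_zero subfield_zero[OF K] subfield_one[OF K])

lemma rat_fun_field_intro:
  "poly_over K a \<Longrightarrow> poly_over K b \<Longrightarrow> poly b x \<noteq> 0 \<Longrightarrow> poly a x / poly b x \<in> rat_fun_field K x"
  unfolding rat_fun_field_iff by blast

lemma subfield_rat_fun_field: "is_subfield (rat_fun_field K x)"
proof -
  have zero: "0 \<in> rat_fun_field K x" and one: "1 \<in> rat_fun_field K x"
    using subset_rat_fun_field subfield_zero[OF K] subfield_one[OF K] by auto
  have closed: "a + b \<in> rat_fun_field K x" "a * b \<in> rat_fun_field K x" "- a \<in> rat_fun_field K x"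
    if a: "a \<in> rat_fun_field K x" and b: "b \<in> rat_fun_field K x" for a b
  proof -
    obtain p1 q1 where 1: "poly_over K p1" "poly_over K q1" "poly q1 x \<noteq> 0"
      "a = poly p1 x / poly q1 x"
      using a unfolding rat_fun_field_iff by blast
    obtain p2 q2 where 2: "poly_over K p2" "poly_over K q2" "poly q2 x \<noteq> 0"
      "b = poly p2 x / poly q2 x"
      using b unfolding rat_fun_field_iff by blast
    have sum: "a + b = poly (p1 * q2 + p2 * q1) x / poly (q1 * q2) x"
      unfolding 1(4) 2(4) using 1(3) 2(3) by (simp add: field_simps)
    show "a + b \<in> rat_fun_field K x"
      unfolding sum using 1 2
      by (intro rat_fun_field_intro poly_over_add[OF K] poly_over_mult[OF K]) simp_all
    have prod: "a * b = poly (p1 * p2) x / poly (q1 * q2) x" using 1 2 by simp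
    show "a * b \<in> rat_fun_field K x"
      unfolding prod using 1 2 by (intro rat_fun_field_intro poly_over_mult[OF K]) simp_all
    have neg: "- a = poly (- p1) x / poly q1 x" using 1 by simp
    show "- a \<in> rat_fun_field K x"
      unfolding neg using 1 by (intro rat_fun_field_intro poly_over_uminus[OF K])
  qed
  have inverse: "inverse a \<in> rat_fun_field K x" if a: "a \<in> rat_fun_field K x" for a
  proof -
    obtain p q where pq: "poly_over K p" "poly_over K q" "poly q x \<noteq> 0" "a = poly p x / poly q x"
      using a unfolding rat_fun_field_iff by blast
    show ?thesis
    proof (cases "poly p x = 0")
      case True
      then show ?thesis using pq zero by simp
    next
      case False
      then show ?thesis using pq rat_fun_field_intro[OF pq(2,1) False] by simp
    qed
  qed
  show ?thesis
    unfolding is_subfield_def using zero one closed inverse by simp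
qed

lemma rat_fun_field_least:
  assumes "is_subfield L" "K \<subseteq> L" "x \<in> L"
  shows "rat_fun_field K x \<subseteq> L"
proof
  fix z assume "z \<in> rat_fun_field K x"
  then obtain a b where "poly_over K a" "poly_over K b" "z = poly a x / poly b x"
    unfolding rat_fun_field_iff by blast
  then show "z \<in> L"
    using assms by (simp add: subfield_divide poly_in_subfield poly_over_mono)
qed

end

context
  fixes L :: "'a::field set" and x :: 'a and e :: nat
  assumes L: "is_subfield L" and top_power: "x ^ e \<in> span_over L (\<lambda>j. x ^ j) {..<e}"
begin

lemma span_powers_mult_generator:
  assumes "s \<in> span_over L (\<lambda>j. x ^ j) {..<e}"
  shows "x * s \<in> span_over L (\<lambda>j. x ^ j) {..<e}"
proof -
  obtain d where d: "\<forall>j<e. d j \<in> L" "s = (\<Sum>j<e. d j * x ^ j)"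
    using assms unfolding span_over_def by auto
  have "x ^ Suc j \<in> span_over L (\<lambda>j. x ^ j) {..<e}" if "j < e" for j
    using that top_power span_over_basis[OF L, of "{..<e}" "Suc j" "\<lambda>j. x ^ j"]
    by (cases "Suc j = e") auto
  then have "(\<Sum>j<e. d j * x ^ Suc j) \<in> span_over L (\<lambda>j. x ^ j) {..<e}"
    using d(1) by (intro span_over_sum[OF L] span_over_scale[OF L]) (auto simp del: power_Suc)
  moreover have "x * s = (\<Sum>j<e. d j * x ^ Suc j)"
    by (simp add: d(2) sum_distrib_left algebra_simps)
  ultimately show ?thesis by simp
qed

lemma span_powers_mult:
  assumes "s \<in> span_over L (\<lambda>j. x ^ j) {..<e}" "t \<in> span_over L (\<lambda>j. x ^ j) {..<e}"
  shows "s * t \<in> span_over L (\<lambda>j. x ^ j) {..<e}"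
proof -
  have s_power: "s * x ^ k \<in> span_over L (\<lambda>j. x ^ j) {..<e}" for k
  proof (induction k)
    case (Suc k)
    then show ?case using span_powers_mult_generator[OF Suc] by (metis mult.left_commute power_Suc)
  qed (use assms(1) in simp)
  obtain d where d: "\<forall>j<e. d j \<in> L" "t = (\<Sum>j<e. d j * x ^ j)"
    using assms(2) unfolding span_over_def by auto
  have "s * t = (\<Sum>j<e. d j * (s * x ^ j))"
    by (simp add: d(2) sum_distrib_left algebra_simps)
  also have "\<dots> \<in> span_over L (\<lambda>j. x ^ j) {..<e}"
    by (rule span_over_sum[OF L], rule span_over_scale[OF L s_power]) (use d(1) in auto)
  finally show ?thesis .
qed

text \<open>Inverses exist because every element of the finite-dimensional algebra \<open>L[x]\<close> is
  algebraic over \<open>L\<close>.\<close>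
lemma subfield_span_powers:
  assumes "e \<ge> 1"
  shows "is_subfield (span_over L (\<lambda>j. x ^ j) {..<e})" (is "is_subfield ?S")
    and "L \<subseteq> span_over L (\<lambda>j. x ^ j) {..<e}"
    and "x \<in> span_over L (\<lambda>j. x ^ j) {..<e}"
proof -
  have one: "1 \<in> ?S" using span_over_basis[OF L, of "{..<e}" 0 "\<lambda>j. x ^ j"] assms by simp
  have power: "s ^ k \<in> ?S" if "s \<in> ?S" for s k
    by (induction k) (use one that span_powers_mult in auto)
  show "x \<in> ?S" using span_powers_mult_generator[OF one] by simp
  show "L \<subseteq> ?S" using span_over_scale[OF L one] by auto
  have poly: "poly q s \<in> ?S" if "poly_over L q" "s \<in> ?S" for q s
    unfolding poly_altdef using that power
    by (intro span_over_sum[OF L] span_over_scale[OF L]) (auto simp: poly_over_def)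
  have inverse: "inverse s \<in> ?S" if s: "s \<in> ?S" for s
  proof (cases "s = 0")
    case False
    have "\<forall>k. s ^ k \<in> ?S" using power[OF s] by blast
    then obtain p where "poly_over L p" "p \<noteq> 0" "poly p s = 0"
      using poly_root_if_powers_in_span[OF L finite_lessThan] by blast
    then obtain q where "poly_over L q" "inverse s = poly q s"
      using inverse_eq_poly_if_root[OF L] False by blast
    then show ?thesis using poly s by simp
  qed (simp add: span_over_zero[OF L])
  show "is_subfield ?S"
    unfolding is_subfield_def
    using span_over_zero[OF L] one span_over_add[OF L] span_powers_mult inverse
      span_over_diff[OF L span_over_zero[OF L]]
    by auto
qed

end

section \<open>Residues at rational places\<close>

context discrete_valuation
begin

lemma poly_valring: "in_valring v w \<Longrightarrow> poly_over K p \<Longrightarrow> in_valring v (poly p w)"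
  unfolding poly_altdef poly_over_def
  by (intro valring_sum valring_mult valring_power) (simp_all add: valring_const)

lemma poly_minus_coeff_0_maxideal:
  assumes "in_maxideal v w" "poly_over K p"
  shows "in_maxideal v (poly p w - coeff p 0)"
proof -
  obtain c q where p: "p = pCons c q" by (metis pCons_cases)
  have "in_valring v (poly q w)"
    using assms p poly_valring maxideal_imp_valring by auto
  then show ?thesis using maxideal_mult[of "poly q w" w] assms(1) p by (simp add: mult.commute)
qed

lemma poly_unit:
  assumes "in_maxideal v w" "poly_over K p" "coeff p 0 \<noteq> 0"
  shows "poly p w \<noteq> 0" and "v (poly p w) = 0"
proof -
  have "coeff p 0 \<in> K" using assms(2) by (simp add: poly_over_def)
  then have "\<not> in_maxideal v (poly p w)"
    using maxideal_diff[OF _ poly_minus_coeff_0_maxideal[OF assms(1,2)]] const_not_maxideal assms(3)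
    by fastforce
  moreover have "in_valring v (poly p w)" using poly_valring maxideal_imp_valring assms by blast
  ultimately show "poly p w \<noteq> 0" "v (poly p w) = 0"
    unfolding in_maxideal_def in_valring_def by auto
qed

lemma maxideal_divide_residues:
  assumes "in_maxideal v (u - a)" "in_maxideal v (u' - b)" "a \<in> K" "b \<in> K" "b \<noteq> 0"
    and "u' \<noteq> 0" "v u' = 0"
  shows "in_maxideal v (u / u' - a / b)"
proof -
  have "u / u' - a / b = inverse (u' * b) * (b * (u - a) - a * (u' - b))"
    using assms(5,6) by (simp add: field_simps)
  moreover have "in_valring v (inverse (u' * b))"
    using assms(4-7) by (simp add: in_valring_def val_inverse val_mult val_const)
  moreover have "in_maxideal v (b * (u - a) - a * (u' - b))"
    using maxideal_diff[OF maxideal_mult[OF valring_const assms(1)]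
        maxideal_mult[OF valring_const assms(2)]]
      assms(3,4) by blast
  ultimately show ?thesis using maxideal_mult by simp
qed

text \<open>Numerator and denominator are \<open>w\<close>-powers times units, so an integral element of
  \<open>K(w)\<close> is a quotient of units (or lies in the maximal ideal).\<close>
lemma residue_exists_rat_fun_field:
  assumes w: "in_maxideal v w" "w \<noteq> 0" and y: "y \<in> rat_fun_field K w" "in_valring v y"
  shows "\<exists>a\<in>K. in_maxideal v (y - a)"
proof (cases "y = 0")
  case True
  then show ?thesis using subfield_zero[OF subfield] by (auto simp: in_maxideal_def)
next
  case False
  obtain p q where pq: "poly_over K p" "poly_over K q" "poly q w \<noteq> 0" "y = poly p w / poly q w"
    using y(1) rat_fun_field_iff[OF subfield] by blast
  have "p \<noteq> 0" "q \<noteq> 0" using pq(3,4) False by auto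
  obtain k p1 where p1: "poly_over K p1" "coeff p1 0 \<noteq> 0" "poly p w = w ^ k * poly p1 w"
    using poly_over_factor_power[OF pq(1) \<open>p \<noteq> 0\<close>] by blast
  obtain l q1 where q1: "poly_over K q1" "coeff q1 0 \<noteq> 0" "poly q w = w ^ l * poly q1 w"
    using poly_over_factor_power[OF pq(2) \<open>q \<noteq> 0\<close>] by blast
  note units = poly_unit[OF w(1) p1(1,2)] poly_unit[OF w(1) q1(1,2)]
  have vy: "v y = (int k - int l) * v w"
    using pq(4) p1(3) q1(3) units w(2) by (simp add: val_divide val_mult val_power algebra_simps)
  have vw: "0 < v w" using w unfolding in_maxideal_def by auto
  moreover have "0 \<le> v y" using y(2) False unfolding in_valring_def by auto
  ultimately have "l \<le> k" using vy by (simp add: zero_le_mult_iff)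
  show ?thesis
  proof (cases "k = l")
    case False
    then have "0 < v (y - 0)" using vy vw \<open>l \<le> k\<close> by simp
    then show ?thesis using subfield_zero[OF subfield] unfolding in_maxideal_def by blast
  next
    case True
    have "y = poly p1 w / poly q1 w" using pq(4) p1(3) q1(3) True w(2) by simp
    moreover have "coeff p1 0 \<in> K" "coeff q1 0 \<in> K"
      using p1(1) q1(1) by (simp_all add: poly_over_def)
    ultimately show ?thesis
      using maxideal_divide_residues[OF poly_minus_coeff_0_maxideal[OF w(1) p1(1)]
          poly_minus_coeff_0_maxideal[OF w(1) q1(1)]] q1(2) units(3,4)
        subfield_divide[OF subfield]
      by blast
  qed
qed

text \<open>If \<open>F\<close> is finite over \<open>K(x)\<close>, the valuation cannot be trivial on \<open>K(x)\<close>: otherwise a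
  nontrivial \<open>K(x)\<close>-relation among the powers of a uniformizer would have terms of pairwise
  distinct valuations.\<close>
lemma exists_positive_val_in_rat_fun_field:
  assumes "finite I" "\<forall>f. f \<in> span_over (rat_fun_field K x) B I"
  shows "\<exists>w\<in>rat_fun_field K x. w \<noteq> 0 \<and> 0 < v w"
proof -
  let ?L = "rat_fun_field K x"
  have L: "is_subfield ?L" using subfield_rat_fun_field[OF subfield] .
  obtain z where z: "z \<noteq> 0" "v z = 1" using exists_uniformizer by blast
  obtain p where p: "poly_over ?L p" "p \<noteq> 0" "poly p z = 0"
    using poly_root_if_powers_in_span[OF L assms(1)] assms(2) by blast
  have "\<exists>k. coeff p k \<noteq> 0 \<and> v (coeff p k) \<noteq> 0"
  proof (rule ccontr)
    assume val_0: "\<not> ?thesis"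
    define A where "A = {k\<in>{..degree p}. coeff p k \<noteq> 0}"
    have "(\<Sum>k\<in>A. coeff p k * z ^ k) = poly p z"
      unfolding poly_altdef A_def by (rule sum.mono_neutral_left) auto
    moreover have "(\<Sum>k\<in>A. coeff p k * z ^ k) \<noteq> 0"
    proof (rule sum_nonzero_if_distinct_vals)
      show "finite A" "A \<noteq> {}" using p(2) by (auto simp: A_def)
      show "coeff p k * z ^ k \<noteq> 0" if "k \<in> A" for k using that z by (simp add: A_def)
      have "v (coeff p k * z ^ k) = int k" if "k \<in> A" for k
      proof -
        have "coeff p k \<noteq> 0" "v (coeff p k) = 0" using that val_0 by (auto simp: A_def)
        then show ?thesis using z by (simp add: val_mult val_power)
      qed
      then show "v (coeff p i * z ^ i) \<noteq> v (coeff p j * z ^ j)" if "i \<in> A" "j \<in> A" "i \<noteq> j" for i j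
        using that by simp
    qed
    ultimately show False using p(3) by simp
  qed
  then obtain c where c: "c \<in> ?L" "c \<noteq> 0" "v c \<noteq> 0" using p(1) by (auto simp: poly_over_def)
  show ?thesis
  proof (cases "0 < v c")
    case False
    then show ?thesis
      using c subfield_inverse[OF L c(1)] val_inverse[OF c(2)]
      by (intro bexI[of _ "inverse c"]) auto
  qed (use c in auto)
qed

text \<open>With \<open>w = a(x) / b(x)\<close>, the element \<open>x\<close> is a root of \<open>a - w b \<noteq> 0\<close> over \<open>K(w)\<close>.\<close>
lemma rat_fun_field_subset_span_powers:
  assumes w: "w \<in> rat_fun_field K x" "w \<noteq> 0" "0 < v w"
  shows "\<exists>e. rat_fun_field K x \<subseteq> span_over (rat_fun_field K w) (\<lambda>j. x ^ j) {..<e}"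
proof -
  let ?L = "rat_fun_field K w"
  have L: "is_subfield ?L" and KL: "K \<subseteq> ?L" and wL: "w \<in> ?L"
    using subfield_rat_fun_field[OF subfield] subset_rat_fun_field[OF subfield]
      generator_in_rat_fun_field[OF subfield] by blast+
  obtain a b where ab: "poly_over K a" "poly_over K b" "poly b x \<noteq> 0" "w = poly a x / poly b x"
    using w(1) rat_fun_field_iff[OF subfield] by blast
  define P where "P = a - smult w b"
  have P: "poly_over ?L P" "poly P x = 0"
    unfolding P_def
    by (intro poly_over_diff[OF L] poly_over_smult[OF L] poly_over_mono[OF KL] wL ab(1,2))
      (use ab(3,4) in simp)
  have "P \<noteq> 0"
  proof
    assume "P = 0"
    obtain i where "coeff b i \<noteq> 0" using ab(3) by (metis leading_coeff_neq_0 poly_0)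
    moreover have "coeff a i = w * coeff b i" using \<open>P = 0\<close> by (simp add: P_def poly_eq_iff)
    ultimately have "w \<in> K"
      using ab(1,2) subfield_divide[OF subfield]
      by (metis nonzero_mult_div_cancel_right poly_over_def)
    then show False using w val_const by simp
  qed
  define e where "e = degree P"
  have top: "x ^ e = (\<Sum>j<e. (- coeff P j / lead_coeff P) * x ^ j)"
    using power_degree_eq_if_root[OF \<open>P \<noteq> 0\<close> P(2)] by (simp add: e_def)
  then have "e \<ge> 1" by (cases e) auto
  have "x ^ e \<in> span_over ?L (\<lambda>j. x ^ j) {..<e}"
    unfolding top using P(1)
    by (intro span_over_sum[OF L] span_over_scale[OF L] span_over_basis[OF L] subfield_divide[OF L]
        subfield_uminus[OF L]) (auto simp: poly_over_def)
  note S = subfield_span_powers[OF L this \<open>e \<ge> 1\<close>]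
  show ?thesis using rat_fun_field_least[OF subfield S(1)] KL S(2,3) by blast
qed

definition residually_independent :: "(nat \<Rightarrow> 'a) \<Rightarrow> nat \<Rightarrow> bool" where
  "residually_independent z d \<longleftrightarrow>
     (\<forall>c. (\<forall>i<d. c i \<in> K) \<longrightarrow> (\<exists>i<d. c i \<noteq> 0) \<longrightarrow> \<not> in_maxideal v (\<Sum>i<d. c i * z i))"

lemma exists_integral_normalization:
  assumes "finite A" "\<exists>i\<in>A. c i \<noteq> 0"
  shows "\<exists>i0\<in>A. c i0 \<noteq> 0 \<and> (\<forall>i\<in>A. in_valring v (c i / c i0))"
proof -
  let ?A = "{i\<in>A. c i \<noteq> 0}"
  have "finite ?A" "?A \<noteq> {}" using assms by auto
  then obtain i0 where i0: "i0 \<in> ?A" "\<And>j. j \<in> ?A \<Longrightarrow> v (c i0) \<le> v (c j)"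
    using ex_is_arg_min_if_finite[of ?A "\<lambda>i. v (c i)"]
    unfolding is_arg_min_def by (auto simp: not_less)
  have "in_valring v (c i / c i0)" if "i \<in> A" for i
    using that i0 by (cases "c i = 0") (auto simp: in_valring_def val_divide)
  then show ?thesis using i0(1) by blast
qed

text \<open>Scale an \<open>L\<close>-linear relation among the \<open>z i\<close> so that its coefficients are integral with
  one of them equal to 1; reducing modulo the maximal ideal gives a \<open>K\<close>-relation.\<close>
lemma residually_independent_card_le:
  assumes L: "is_subfield L" and "finite I" "\<forall>f. f \<in> span_over L B I"
    and res: "\<forall>y\<in>L. in_valring v y \<longrightarrow> (\<exists>a\<in>K. in_maxideal v (y - a))"
    and z: "\<forall>i<d. in_valring v (z i)" "residually_independent z d"
  shows "d \<le> card I"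
proof (rule ccontr)
  assume "\<not> d \<le> card I"
  then have "card I < card {..<d}" by simp
  moreover have "\<forall>j\<in>{..<d}. z j \<in> span_over L B I" using assms(3) by blast
  ultimately obtain c where "\<forall>j\<in>{..<d}. c j \<in> L" "\<exists>j\<in>{..<d}. c j \<noteq> 0"
    "(\<Sum>j<d. c j * z j) = 0"
    using span_over_dependent[OF L assms(2) finite_lessThan] by blast
  then have c: "\<forall>j<d. c j \<in> L" "\<exists>j<d. c j \<noteq> 0" "(\<Sum>j<d. c j * z j) = 0" by auto
  obtain i0 where i0: "i0 < d" "c i0 \<noteq> 0" and integral: "\<And>i. i < d \<Longrightarrow> in_valring v (c i / c i0)"
    using exists_integral_normalization[of "{..<d}" c] c(2) by auto
  define ps where "ps i = c i / c i0" for i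
  have ps: "ps i \<in> L" "in_valring v (ps i)" if "i < d" for i
    using that c(1) i0 subfield_divide[OF L] integral by (simp_all add: ps_def)
  have "\<forall>i. \<exists>a. i < d \<longrightarrow> a \<in> K \<and> in_maxideal v (ps i - a)" using res ps by blast
  then obtain a where a: "\<And>i. i < d \<Longrightarrow> a i \<in> K \<and> in_maxideal v (ps i - a i)"
    by metis
  have "a i0 \<noteq> 0"
    using a[OF i0(1)] i0 const_not_maxideal[OF subfield_one[OF subfield]] by (auto simp: ps_def)
  have "(\<Sum>i<d. ps i * z i) = 0"
    using c(3) by (simp add: ps_def sum_divide_distrib[symmetric] divide_simps)
  then have "(\<Sum>i<d. a i * z i) = - (\<Sum>i<d. (ps i - a i) * z i)"
    by (simp add: sum_subtractf algebra_simps)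
  moreover have "in_maxideal v (\<Sum>i<d. (ps i - a i) * z i)"
    using a z(1) by (auto intro!: maxideal_sum simp: mult.commute[of _ "z _"] maxideal_mult)
  ultimately have "in_maxideal v (\<Sum>i<d. a i * z i)" using maxideal_uminus by simp
  then show False
    using z(2) a \<open>a i0 \<noteq> 0\<close> i0(1) unfolding residually_independent_def by blast
qed

lemma residually_independent_bounded:
  assumes "global_function_field K"
  shows "\<exists>M. \<forall>z d. (\<forall>i<d. in_valring v (z i)) \<longrightarrow> residually_independent z d \<longrightarrow> d \<le> M"
proof -
  obtain x bs where bs: "\<forall>f. \<exists>cs. length cs = length bs \<and> set cs \<subseteq> rat_fun_field K x \<and>
      f = sum_list (map2 (*) cs bs)"
    using assms unfolding global_function_field_def by blast
  have "f \<in> span_over (rat_fun_field K x) (\<lambda>i. bs ! i) {..<length bs}" for f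
  proof -
    obtain cs where cs: "length cs = length bs" "set cs \<subseteq> rat_fun_field K x"
      "f = sum_list (map2 (*) cs bs)"
      using bs by blast
    have "\<forall>i\<in>{..<length bs}. cs ! i \<in> rat_fun_field K x" using cs(1,2) nth_mem[of _ cs] by auto
    then show ?thesis
      unfolding span_over_def using cs(1,3) by (auto simp: sum_list_map2_times)
  qed
  then have span: "\<forall>f. f \<in> span_over (rat_fun_field K x) (\<lambda>i. bs ! i) {..<length bs}" by blast
  obtain w where w: "w \<in> rat_fun_field K x" "w \<noteq> 0" "0 < v w"
    using exists_positive_val_in_rat_fun_field[OF _ span] by blast
  obtain e where e: "rat_fun_field K x \<subseteq> span_over (rat_fun_field K w) (\<lambda>j. x ^ j) {..<e}"
    using rat_fun_field_subset_span_powers[OF w] by blast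
  let ?L = "rat_fun_field K w" and ?I = "{..<length bs} \<times> {..<e}"
  have L: "is_subfield ?L" using subfield_rat_fun_field[OF subfield] .
  have "\<forall>f. f \<in> span_over ?L (\<lambda>(i, j). x ^ j * bs ! i) ?I"
    using span span_over_trans[OF L _ _ e] by blast
  moreover have "\<forall>y\<in>?L. in_valring v y \<longrightarrow> (\<exists>a\<in>K. in_maxideal v (y - a))"
    using residue_exists_rat_fun_field w(2,3) by (auto simp: in_maxideal_def)
  ultimately show ?thesis
    using residually_independent_card_le[OF L, of ?I] by blast
qed

definition residue_spanning :: "nat \<Rightarrow> bool" where
  "residue_spanning d \<longleftrightarrow> (\<exists>bs. length bs = d \<and> (\<forall>b\<in>set bs. in_valring v b) \<and>
      (\<forall>f. in_valring v f \<longrightarrow> (\<exists>cs. length cs = d \<and> set cs \<subseteq> K \<and>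
            in_maxideal v (f - sum_list (map2 (*) cs bs)))))"

lemma place_degree_eq_Least: "place_degree K v = (LEAST d. residue_spanning d)"
  unfolding place_degree_def residue_spanning_def ..

lemma residue_spanning_if_maximal:
  assumes z: "\<forall>i<d. in_valring v (z i)" "residually_independent z d"
    and maximal: "\<And>f. in_valring v f \<Longrightarrow> \<not> residually_independent (z(d := f)) (Suc d)"
  shows "residue_spanning d"
  unfolding residue_spanning_def
proof (rule exI[of _ "map z [0..<d]"], intro conjI allI impI)
  show "length (map z [0..<d]) = d" "\<forall>b\<in>set (map z [0..<d]). in_valring v b"
    using z(1) by auto
  fix f assume f: "in_valring v f"
  obtain c where c: "\<forall>i<Suc d. c i \<in> K" "\<exists>i<Suc d. c i \<noteq> 0"
    "in_maxideal v (\<Sum>i<Suc d. c i * (z(d := f)) i)"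
    using maximal[OF f] unfolding residually_independent_def by blast
  have sum_eq: "(\<Sum>i<Suc d. c i * (z(d := f)) i) = (\<Sum>i<d. c i * z i) + c d * f" by simp
  have "c d \<noteq> 0"
  proof
    assume "c d = 0"
    then show False
      using z(2) c sum_eq unfolding residually_independent_def by (auto simp: less_Suc_eq)
  qed
  define cs where "cs = map (\<lambda>i. - c i / c d) [0..<d]"
  have "sum_list (map2 (*) cs (map z [0..<d])) = (\<Sum>i<d. - c i / c d * z i)"
    by (simp add: sum_list_map2_times cs_def)
  then have "f - sum_list (map2 (*) cs (map z [0..<d]))
      = inverse (c d) * (\<Sum>i<Suc d. c i * (z(d := f)) i)"
    using \<open>c d \<noteq> 0\<close> unfolding sum_eq
    by (simp add: field_simps sum_divide_distrib[symmetric] sum_negf)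
  moreover have "in_valring v (inverse (c d))"
    using c(1) by (simp add: valring_const subfield_inverse[OF subfield])
  ultimately have "in_maxideal v (f - sum_list (map2 (*) cs (map z [0..<d])))"
    using maxideal_mult c(3) by simp
  moreover have "length cs = d" "set cs \<subseteq> K"
    using c(1) subfield_divide[OF subfield] subfield_uminus[OF subfield] by (auto simp: cs_def)
  ultimately show "\<exists>cs. length cs = d \<and> set cs \<subseteq> K \<and>
      in_maxideal v (f - sum_list (map2 (*) cs (map z [0..<d])))"
    by blast
qed

lemma exists_residue_spanning:
  assumes "global_function_field K"
  shows "\<exists>d. residue_spanning d"
proof -
  obtain M where M: "\<And>z d. \<forall>i<d. in_valring v (z i) \<Longrightarrow> residually_independent z d \<Longrightarrow> d \<le> M"
    using residually_independent_bounded[OF assms] by blast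
  define D where "D = {d. \<exists>z. (\<forall>i<d. in_valring v (z i)) \<and> residually_independent z d}"
  have mem_D: "d \<in> D \<longleftrightarrow> (\<exists>z. (\<forall>i<d. in_valring v (z i)) \<and> residually_independent z d)" for d
    by (simp add: D_def)
  have "0 \<in> D" by (simp add: mem_D residually_independent_def)
  have "finite D" using M mem_D by (intro finite_subset[of D "{..M}"]) auto
  then have "Max D \<in> D" using Max_in \<open>0 \<in> D\<close> by blast
  have "Suc (Max D) \<notin> D" using Max_ge[OF \<open>finite D\<close>, of "Suc (Max D)"] by linarith
  obtain z where z: "\<forall>i<Max D. in_valring v (z i)" "residually_independent z (Max D)"
    using \<open>Max D \<in> D\<close> mem_D by blast
  have "\<not> residually_independent (z(Max D := f)) (Suc (Max D))" if "in_valring v f" for f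
  proof
    assume "residually_independent (z(Max D := f)) (Suc (Max D))"
    moreover have "\<forall>i<Suc (Max D). in_valring v ((z(Max D := f)) i)"
      using z(1) that by (simp add: less_Suc_eq)
    ultimately show False using \<open>Suc (Max D) \<notin> D\<close> mem_D by blast
  qed
  then show ?thesis using residue_spanning_if_maximal[OF z] by blast
qed

text \<open>Since the place is rational, there is a single \<open>b\<close> with \<open>f \<equiv> c b\<close> modulo the maximal
  ideal for all integral \<open>f\<close>; applying this to \<open>f = 1\<close> shows that \<open>b\<close> is congruent to a constant.\<close>
lemma residue_exists:
  assumes "global_function_field K" "rational_place K v" "in_valring v f"
  shows "\<exists>a\<in>K. in_maxideal v (f - a)"
proof -
  have "place_degree K v = 1" using assms(2) by (simp add: rational_place_def)
  then have "residue_spanning 1"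
    using LeastI_ex[OF exists_residue_spanning[OF assms(1)]] place_degree_eq_Least by simp
  then obtain b where b: "\<And>f. in_valring v f \<Longrightarrow> \<exists>c\<in>K. in_maxideal v (f - c * b)"
    unfolding residue_spanning_def by (fastforce simp: length_Suc_conv)
  obtain c1 where c1: "c1 \<in> K" "in_maxideal v (1 - c1 * b)"
    using b[OF valring_const[OF subfield_one[OF subfield]]] by blast
  have "c1 \<noteq> 0" using c1(2) const_not_maxideal[OF subfield_one[OF subfield]] by auto
  obtain c where c: "c \<in> K" "in_maxideal v (f - c * b)" using b[OF assms(3)] by blast
  have eq: "f - c / c1 = (f - c * b) - (c / c1) * (1 - c1 * b)"
    using \<open>c1 \<noteq> 0\<close> by (simp add: field_simps)
  have cK: "c / c1 \<in> K" using c(1) c1(1) by (rule subfield_divide[OF subfield])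
  have "in_maxideal v (f - c / c1)"
    unfolding eq using maxideal_diff[OF c(2) maxideal_mult[OF valring_const[OF cK] c1(2)]] .
  then show ?thesis using cK by blast
qed

end

section \<open>Local expansions\<close>

lemma subfield_if_global_function_field: "global_function_field K \<Longrightarrow> is_subfield K"
  unfolding global_function_field_def by blast

locale local_parameter =
  fixes K :: "'a::field set" and v :: "'a \<Rightarrow> int" and t :: 'a
  assumes function_field: "global_function_field K" and rational: "rational_place K v"
    and uniformizer: "v t = 1"
begin

sublocale discrete_valuation K v
proof
  show "is_subfield K" using subfield_if_global_function_field[OF function_field] .
  show "normalized_valuation K v" using rational by (simp add: rational_place_def)
qed

lemma residue:
  assumes "in_valring v f"
  shows "residue K v f \<in> K \<and> in_maxideal v (f - residue K v f)"
proof -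
  obtain a where a: "a \<in> K" "in_maxideal v (f - a)"
    using residue_exists[OF function_field rational assms] by blast
  have "residue K v f = a"
    unfolding residue_def using a residue_unique by (intro the_equality) blast+
  then show ?thesis using a by simp
qed

lemma residue_eqI: "in_valring v f \<Longrightarrow> a \<in> K \<Longrightarrow> in_maxideal v (f - a) \<Longrightarrow> residue K v f = a"
  using residue residue_unique by blast

lemma residue_diff:
  assumes "in_valring v f" "in_valring v g"
  shows "residue K v (f - g) = residue K v f - residue K v g"
proof (rule residue_eqI)
  note rf = residue[OF assms(1)] and rg = residue[OF assms(2)]
  show "in_valring v (f - g)" using valring_diff assms by blast
  show "residue K v f - residue K v g \<in> K" using subfield_diff[OF subfield] rf rg by blast
  have eq: "f - g - (residue K v f - residue K v g) = (f - residue K v f) - (g - residue K v g)"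
    by simp
  show "in_maxideal v (f - g - (residue K v f - residue K v g))"
    unfolding eq using rf rg by (blast intro: maxideal_diff[of "f - residue K v f"])
qed

lemma residue_zero: "residue K v 0 = 0"
  using residue_eqI[of 0 0] subfield_zero[OF subfield] by (simp add: in_valring_def in_maxideal_def)

lemma valring_expansion_step:
  assumes "in_valring v f"
  shows "in_valring v ((f - residue K v f) / t)"
proof (cases "f - residue K v f = 0")
  case False
  moreover have "in_maxideal v (f - residue K v f)" using residue assms by blast
  moreover have "t \<noteq> 0" using uniformizer val_zero by auto
  ultimately show ?thesis using uniformizer by (simp add: in_maxideal_def in_valring_def val_divide)
qed (simp add: in_valring_def)

lemma loc_coeff_diff:
  "in_valring v f \<Longrightarrow> in_valring v g \<Longrightarrow>
     loc_coeff K v t (f - g) k = loc_coeff K v t f k - loc_coeff K v t g k"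
proof (induction k arbitrary: f g)
  case (Suc k)
  have "(f - g - residue K v (f - g)) / t = (f - residue K v f) / t - (g - residue K v g) / t"
    using Suc.prems by (simp add: residue_diff diff_divide_distrib)
  then show ?case
    using Suc.IH[OF valring_expansion_step[OF Suc.prems(1)] valring_expansion_step[OF Suc.prems(2)]]
    by simp
qed (simp add: residue_diff)

lemma loc_coeff_zero: "loc_coeff K v t 0 k = 0"
  by (induction k) (simp_all add: residue_zero)

lemma loc_coeff_order:
  "in_valring v f \<Longrightarrow> f \<noteq> 0 \<Longrightarrow> nat (v f) = j \<Longrightarrow>
     (\<forall>k<j. loc_coeff K v t f k = 0) \<and> loc_coeff K v t f j \<noteq> 0"
proof (induction j arbitrary: f)
  case 0
  then have "v f = 0" by (simp add: in_valring_def)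
  then have "residue K v f \<noteq> 0" using residue[OF 0(1)] 0(2) by (auto simp: in_maxideal_def)
  then show ?case by simp
next
  case (Suc j)
  then have vf: "v f = int (Suc j)" by (simp add: in_valring_def)
  then have res: "residue K v f = 0"
    using residue_eqI[OF Suc.prems(1) subfield_zero[OF subfield]] by (simp add: in_maxideal_def)
  have "t \<noteq> 0" using uniformizer val_zero by auto
  then have "f / t \<noteq> 0" "v (f / t) = int j"
    using Suc.prems(2) vf uniformizer by (auto simp: val_divide)
  then have "(\<forall>k<j. loc_coeff K v t (f / t) k = 0) \<and> loc_coeff K v t (f / t) j \<noteq> 0"
    using Suc.IH by (simp add: in_valring_def)
  then show ?case using res by (auto simp: less_Suc_eq_0_disj)
qed

lemma loc_coeff_leading_iff:
  assumes "in_valring v f"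
  shows "(\<forall>k<j. loc_coeff K v t f k = 0) \<and> loc_coeff K v t f j \<noteq> 0 \<longleftrightarrow> f \<noteq> 0 \<and> v f = int j"
proof
  assume lead: "(\<forall>k<j. loc_coeff K v t f k = 0) \<and> loc_coeff K v t f j \<noteq> 0"
  then have "f \<noteq> 0" using loc_coeff_zero by auto
  with assms have "(\<forall>k<nat (v f). loc_coeff K v t f k = 0) \<and> loc_coeff K v t f (nat (v f)) \<noteq> 0"
    using loc_coeff_order by blast
  with lead have "nat (v f) = j" by (metis linorder_neqE_nat)
  then show "f \<noteq> 0 \<and> v f = int j" using assms \<open>f \<noteq> 0\<close> by (auto simp: in_valring_def)
qed (use assms loc_coeff_order in auto)

end

section \<open>Leading levels of vectors\<close>

lemma finite_I_ell: "finite (I_ell n m l A)"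
  by (rule finite_subset[of _ "{1..n}"]) (auto simp: I_ell_def)

lemma I_ell_unique:
  assumes "i \<in> I_ell n m l C" "i \<in> I_ell n m l' C" "l \<le> m" "l' \<le> m"
  shows "l = l'"
proof (rule ccontr)
  assume "l \<noteq> l'"
  then have "l' \<in> {l+1..m} \<or> l \<in> {l'+1..m}" using assms(3,4) by auto
  then show False using assms(1,2) unfolding I_ell_def by auto
qed

lemma I_ell_diff_cases:
  assumes "l \<in> {1..m}" "i \<in> I_ell n m l (\<lambda>i k. A i k - B i k)"
  shows "i \<in> I_ell n m l A \<or> i \<in> I_ell n m l B \<or>
    (\<exists>\<nu>\<in>{l+1..m}. i \<in> I_ell n m \<nu> A \<and> i \<in> I_ell n m \<nu> B)"
proof -
  have i: "i \<in> {1..n}" "\<forall>k\<in>{l+1..m}. A i k = B i k" "A i l \<noteq> B i l"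
    using assms(2) unfolding I_ell_def by auto
  show ?thesis
  proof (cases "\<exists>\<nu>\<in>{l+1..m}. A i \<nu> \<noteq> 0")
    case True
    define S where "S = {\<nu>\<in>{l+1..m}. A i \<nu> \<noteq> 0}"
    have S: "finite S" "S \<noteq> {}" using True by (auto simp: S_def)
    define \<nu> where "\<nu> = Max S"
    have "\<nu> \<in> S" using Max_in[OF S] by (simp add: \<nu>_def)
    then have \<nu>: "\<nu> \<in> {l+1..m}" "A i \<nu> \<noteq> 0" by (auto simp: S_def)
    have top: "A i k = 0" if "k \<in> {\<nu>+1..m}" for k
    proof (rule ccontr)
      assume "A i k \<noteq> 0"
      then have "k \<in> S" using that \<nu>(1) by (auto simp: S_def)
      then show False using Max_ge[OF S(1), of k] that by (simp add: \<nu>_def)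
    qed
    then have "\<forall>k\<in>{\<nu>+1..m}. B i k = 0" "B i \<nu> \<noteq> 0" using i(2) \<nu> by auto
    then have "i \<in> I_ell n m \<nu> A \<and> i \<in> I_ell n m \<nu> B" using \<nu> top i(1) by (simp add: I_ell_def)
    then show ?thesis using \<nu>(1) by blast
  next
    case False
    then show ?thesis using i by (cases "A i l = 0") (auto simp: I_ell_def)
  qed
qed

lemma card_I_ell_diff_le:
  assumes A: "\<forall>l\<in>{1..m}. card (I_ell n m l A) \<le> X l" and B: "\<forall>l\<in>{1..m}. card (I_ell n m l B) \<le> X l"
    and l: "l \<in> {1..m}"
  shows "card (I_ell n m l (\<lambda>i k. A i k - B i k)) \<le> 2 * X l + (\<Sum>\<nu>=l+1..m. X \<nu>)"
proof -
  let ?U = "\<Union>\<nu>\<in>{l+1..m}. I_ell n m \<nu> A"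
  have "I_ell n m l (\<lambda>i k. A i k - B i k) \<subseteq> I_ell n m l A \<union> I_ell n m l B \<union> ?U"
    using I_ell_diff_cases[OF l] by blast
  then have "card (I_ell n m l (\<lambda>i k. A i k - B i k)) \<le> card (I_ell n m l A \<union> I_ell n m l B \<union> ?U)"
    by (intro card_mono) (simp_all add: finite_I_ell)
  also have "\<dots> \<le> card (I_ell n m l A) + card (I_ell n m l B) + card ?U"
    by (meson add_le_mono card_Un_le le_refl order_trans)
  also have "card ?U \<le> (\<Sum>\<nu>=l+1..m. card (I_ell n m \<nu> A))"
    by (rule card_UN_le) simp
  also have "\<dots> \<le> (\<Sum>\<nu>=l+1..m. X \<nu>)"
    using A l by (intro sum_mono) auto
  finally have "card (I_ell n m l (\<lambda>i k. A i k - B i k))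
      \<le> card (I_ell n m l A) + card (I_ell n m l B) + (\<Sum>\<nu>=l+1..m. X \<nu>)"
    by simp
  moreover have "card (I_ell n m l A) \<le> X l" "card (I_ell n m l B) \<le> X l" using A B l by auto
  ultimately show ?thesis by linarith
qed

text \<open>Row \<open>i\<close> lies in at most one \<open>I_ell n m l C\<close>, so this is \<open>l + 1\<close> for the level \<open>l\<close> of
  its leading entry, and \<open>0\<close> if there is none; summing over the rows gives \<open>J_m\<close>.\<close>
definition row_weight :: "nat \<Rightarrow> nat \<Rightarrow> (nat \<Rightarrow> nat \<Rightarrow> 'a::field) \<Rightarrow> nat \<Rightarrow> nat" where
  "row_weight n m C i = (\<Sum>l=1..m. (l + 1) * (if i \<in> I_ell n m l C then 1 else 0))"

lemma sum_row_weight: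
  "(\<Sum>i=1..n. row_weight n m C i) = (\<Sum>l=1..m. (l + 1) * card (I_ell n m l C))"
proof -
  have card_eq: "card (I_ell n m l C) = (\<Sum>i=1..n. if i \<in> I_ell n m l C then 1 else 0)" for l
  proof -
    have "I_ell n m l C = {i\<in>{1..n}. i \<in> I_ell n m l C}" by (auto simp: I_ell_def)
    then have "card (I_ell n m l C) = (\<Sum>i\<in>{i\<in>{1..n}. i \<in> I_ell n m l C}. 1)" by simp
    also have "\<dots> = (\<Sum>i=1..n. if i \<in> I_ell n m l C then 1 else 0)"
      using sum.inter_filter[of "{1..n}" "\<lambda>_. 1::nat" "\<lambda>i. i \<in> I_ell n m l C"] by simp
    finally show ?thesis .
  qed
  show ?thesis unfolding row_weight_def card_eq sum_distrib_left by (rule sum.swap)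
qed

lemma row_weight_eq:
  assumes "i \<in> I_ell n m l C" "l \<in> {1..m}"
  shows "row_weight n m C i = l + 1"
proof -
  have "i \<in> I_ell n m l' C \<longleftrightarrow> l' = l" if "l' \<in> {1..m}" for l'
    using I_ell_unique[OF assms(1), of l'] assms that by auto
  then have "row_weight n m C i = (\<Sum>l'=1..m. if l' = l then l + 1 else 0)"
    unfolding row_weight_def by (intro sum.cong) simp_all
  then show ?thesis using assms(2) by simp
qed

lemma row_weight_diff_le:
  "row_weight n m (\<lambda>i k. A i k - B i k) i \<le> row_weight n m A i + row_weight n m B i"
proof (cases "\<exists>l\<in>{1..m}. i \<in> I_ell n m l (\<lambda>i k. A i k - B i k)")
  case True
  then obtain l where l: "l \<in> {1..m}" "i \<in> I_ell n m l (\<lambda>i k. A i k - B i k)" by blast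
  have "row_weight n m (\<lambda>i k. A i k - B i k) i = l + 1" using row_weight_eq[OF l(2,1)] .
  moreover have "l + 1 \<le> row_weight n m A i + row_weight n m B i"
    using I_ell_diff_cases[OF l] l(1) row_weight_eq[of i n m _ A] row_weight_eq[of i n m _ B]
    by fastforce
  ultimately show ?thesis by simp
next
  case False
  then have "row_weight n m (\<lambda>i k. A i k - B i k) i = 0" unfolding row_weight_def by simp
  then show ?thesis by simp
qed

lemma weighted_card_I_ell_diff_le:
  assumes A: "\<forall>l\<in>{1..m}. card (I_ell n m l A) \<le> X l" and B: "\<forall>l\<in>{1..m}. card (I_ell n m l B) \<le> X l"
  shows "(\<Sum>l=1..m. (l + 1) * card (I_ell n m l (\<lambda>i k. A i k - B i k)))
    \<le> 2 * (\<Sum>l=1..m. (l + 1) * X l)"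
proof -
  have "(\<Sum>l=1..m. (l + 1) * card (I_ell n m l (\<lambda>i k. A i k - B i k)))
      \<le> (\<Sum>i=1..n. row_weight n m A i + row_weight n m B i)"
    unfolding sum_row_weight[symmetric] by (intro sum_mono row_weight_diff_le)
  also have "\<dots> = (\<Sum>l=1..m. (l + 1) * card (I_ell n m l A))
      + (\<Sum>l=1..m. (l + 1) * card (I_ell n m l B))"
    unfolding sum.distrib sum_row_weight ..
  also have "\<dots> \<le> (\<Sum>l=1..m. (l + 1) * X l) + (\<Sum>l=1..m. (l + 1) * X l)"
    using A B by (intro add_mono sum_mono mult_le_mono2) auto
  finally show ?thesis by simp
qed

section \<open>The distance of the code\<close>

lemma M_set_card_I_ell:
  assumes "\<alpha> \<in> M_set K n m x c" "l \<in> {1..m}"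
  shows "card (I_ell n m l (\<lambda>i k. \<alpha> i k - c i k)) \<le> flx x n l"
proof -
  have "int (card (I_ell n m l (\<lambda>i k. \<alpha> i k - c i k))) \<le> \<lfloor>x l * real n\<rfloor>"
    using assms unfolding M_set_def by blast
  then show ?thesis unfolding flx_def by linarith
qed

lemma RR_space_diff:
  assumes K: "is_subfield K" and f: "f \<in> RR_space K G" and g: "g \<in> RR_space K G"
  shows "f - g \<in> RR_space K G"
proof -
  have "- G P \<le> P (f - g)" if P: "normalized_valuation K P" "f - g \<noteq> 0" for P
  proof -
    interpret discrete_valuation K P using K P(1) by unfold_locales
    show ?thesis
    proof (cases "f = 0 \<or> g = 0")
      case True
      then show ?thesis using f g P by (auto simp: RR_space_def val_uminus)
    next
      case False
      then have "- G P \<le> P f" "- G P \<le> P g" using f g P(1) by (auto simp: RR_space_def)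
      then show ?thesis using val_diff[of f g] False P(2) by simp
    qed
  qed
  then show ?thesis by (auto simp: RR_space_def)
qed

lemma RR_space_valring:
  "f \<in> RR_space K G \<Longrightarrow> G P = 0 \<Longrightarrow> normalized_valuation K P \<Longrightarrow> in_valring P f"
  unfolding RR_space_def in_valring_def by auto

lemma div_deg_div_bar:
  assumes inj: "inj_on Pl {1..n}" and rational: "\<forall>i\<in>{1..n}. rational_place K (Pl i)"
  shows "div_deg K (div_bar Pl n m E) = (\<Sum>i=1..n. min (int m + 1) (E (Pl i)))"
proof -
  let ?D = "div_bar Pl n m E"
  have "{Q. ?D Q \<noteq> 0} \<subseteq> Pl ` {1..n}" by (auto simp: div_bar_def split: if_splits)
  then have "div_deg K ?D = (\<Sum>Q\<in>Pl ` {1..n}. int (place_degree K Q) * ?D Q)"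
    unfolding div_deg_def by (intro sum.mono_neutral_left) auto
  also have "\<dots> = (\<Sum>i=1..n. int (place_degree K (Pl i)) * ?D (Pl i))"
    by (rule sum.reindex[OF inj, unfolded comp_def])
  also have "\<dots> = (\<Sum>i=1..n. min (int m + 1) (E (Pl i)))"
    using rational by (intro sum.cong) (auto simp: rational_place_def div_bar_def)
  finally show ?thesis .
qed

text \<open>The contribution of a place where \<open>E\<close> has coefficient \<open>e\<close> to the number of coefficients
  equal to \<open>m\<close>, to \<open>J_m E\<close> and to \<open>deg (div_bar E)\<close>.\<close>
lemma point_contribution_ge:
  assumes "(e::int) \<ge> 0"
  shows "int m + 1 \<le> int (of_bool (e = int m)) +
    int (\<Sum>l=1..m. (l + 1) * of_bool (e = int m - int l)) + min (int m + 1) e"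
proof (cases "e \<ge> int m + 1")
  case False
  define l where "l = m - nat e"
  have e: "e = int m - int l" "l \<le> m" using False assms by (auto simp: l_def)
  show ?thesis
  proof (cases "l = 0")
    case False
    then have "(l + 1) * of_bool (e = int m - int l)
        \<le> (\<Sum>l'=1..m. (l' + 1) * of_bool (e = int m - int l'))"
      using e by (intro member_le_sum) auto
    moreover have "(l + 1) * of_bool (e = int m - int l) = l + 1" using e by simp
    moreover have "min (int m + 1) e = e" using e by simp
    ultimately show ?thesis using e by linarith
  qed (use e in simp)
qed simp

lemma card_order_m_ge:
  assumes inj: "inj_on Pl {1..n}" and rational: "\<forall>i\<in>{1..n}. rational_place K (Pl i)"
    and E: "\<forall>i\<in>{1..n}. E (Pl i) \<ge> 0"
  shows "int ((m + 1) * n) \<le> int (card {i\<in>{1..n}. E (Pl i) = int m}) + int (J_m Pl n m E)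
    + div_deg K (div_bar Pl n m E)"
proof -
  have card_eq: "card {i\<in>{1..n}. P i} = (\<Sum>i=1..n. of_bool (P i))" for P
  proof -
    have "{i\<in>{1..n}. P i} = {1..n} \<inter> {i. P i}" by auto
    then show ?thesis by simp
  qed
  have "J_m Pl n m E = (\<Sum>l=1..m. (l + 1) * (\<Sum>i=1..n. of_bool (E (Pl i) = int m - int l)))"
    unfolding J_m_def j_ell_def card_eq ..
  also have "\<dots> = (\<Sum>i=1..n. \<Sum>l=1..m. (l + 1) * of_bool (E (Pl i) = int m - int l))"
    unfolding sum_distrib_left by (rule sum.swap)
  finally have J: "J_m Pl n m E = \<dots>" .
  have "int ((m + 1) * n) = (\<Sum>i=1..n. int m + 1)" by (simp add: algebra_simps)
  also have "\<dots> \<le> (\<Sum>i=1..n. int (of_bool (E (Pl i) = int m)) +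
      int (\<Sum>l=1..m. (l + 1) * of_bool (E (Pl i) = int m - int l)) + min (int m + 1) (E (Pl i)))"
    using E by (intro sum_mono point_contribution_ge) auto
  also have "\<dots> = int (card {i\<in>{1..n}. E (Pl i) = int m}) + int (J_m Pl n m E)
      + div_deg K (div_bar Pl n m E)"
    unfolding card_eq J div_deg_div_bar[OF inj rational] by (simp add: sum.distrib)
  finally show ?thesis .
qed

locale rational_places =
  fixes K :: "'a::field set" and Pl :: "nat \<Rightarrow> 'a \<Rightarrow> int" and t :: "nat \<Rightarrow> 'a" and n :: nat
  assumes function_field: "global_function_field K"
    and inj: "inj_on Pl {1..n}"
    and rational: "\<forall>i\<in>{1..n}. rational_place K (Pl i)"
    and uniformizer: "\<forall>i\<in>{1..n}. Pl i (t i) = 1"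
begin

lemma local_parameter_at: "i \<in> {1..n} \<Longrightarrow> local_parameter K (Pl i) (t i)"
  using function_field rational uniformizer by unfold_locales auto

lemma RR_space_valring_at:
  "f \<in> RR_space K G \<Longrightarrow> G (Pl i) = 0 \<Longrightarrow> i \<in> {1..n} \<Longrightarrow> in_valring (Pl i) f"
  using RR_space_valring[of f K G "Pl i"] rational by (simp add: rational_place_def)

context
  fixes G :: "('a \<Rightarrow> int) \<Rightarrow> int"
  assumes G_supp: "\<forall>i\<in>{1..n}. G (Pl i) = 0"
begin

lemma loc_coeff_RR_diff:
  assumes "f \<in> RR_space K G" "g \<in> RR_space K G" "i \<in> {1..n}"
  shows "loc_coeff K (Pl i) (t i) (f - g) k
    = loc_coeff K (Pl i) (t i) f k - loc_coeff K (Pl i) (t i) g k"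
  using local_parameter.loc_coeff_diff[OF local_parameter_at] RR_space_valring_at G_supp assms
  by blast

lemma Phi_diff:
  assumes "f \<in> RR_space K G" "g \<in> RR_space K G"
  shows "Phi K Pl t n m (f - g) = (\<lambda>i k. Phi K Pl t n m f i k - Phi K Pl t n m g i k)"
  using loc_coeff_RR_diff[OF assms] by (intro ext) (simp add: Phi_def)

text \<open>Slot \<open>k\<close> of \<open>Phi\<close> holds the coefficient of \<open>t^(m - k)\<close>, so level \<open>l\<close> corresponds to
  order \<open>m - l\<close>.\<close>
lemma I_ell_Phi:
  assumes h: "h \<in> RR_space K G" "h \<noteq> 0" and l: "l \<in> {1..m}"
  shows "I_ell n m l (Phi K Pl t n m h) = {i\<in>{1..n}. zero_divisor K h (Pl i) = int m - int l}"
proof (rule set_eqI)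
  fix i
  let ?lc = "loc_coeff K (Pl i) (t i) h"
  have lower: "(\<forall>k\<in>{l+1..m}. ?lc (m - k) = 0) \<longleftrightarrow> (\<forall>j<m - l. ?lc j = 0)"
  proof
    assume "\<forall>j<m - l. ?lc j = 0"
    then show "\<forall>k\<in>{l+1..m}. ?lc (m - k) = 0" by auto
  next
    assume zero: "\<forall>k\<in>{l+1..m}. ?lc (m - k) = 0"
    show "\<forall>j<m - l. ?lc j = 0"
    proof (intro allI impI)
      fix j assume "j < m - l"
      then show "?lc j = 0" using zero[rule_format, of "m - j"] by auto
    qed
  qed
  have "i \<in> I_ell n m l (Phi K Pl t n m h) \<longleftrightarrow>
      i \<in> {1..n} \<and> (\<forall>k\<in>{l+1..m}. ?lc (m - k) = 0) \<and> ?lc (m - l) \<noteq> 0"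
    using l by (auto simp: I_ell_def Phi_def)
  also have "\<dots> \<longleftrightarrow> i \<in> {1..n} \<and> Pl i h = int (m - l)"
    unfolding lower
    using local_parameter.loc_coeff_leading_iff[OF local_parameter_at RR_space_valring_at[OF h(1)]]
      G_supp h(2)
    by blast
  also have "\<dots> \<longleftrightarrow> i \<in> {i\<in>{1..n}. zero_divisor K h (Pl i) = int m - int l}"
    using l rational RR_space_valring_at[OF h(1)] G_supp h(2)
    by (auto simp: zero_divisor_def rational_place_def in_valring_def)
  finally show "i \<in> I_ell n m l (Phi K Pl t n m h) \<longleftrightarrow>
      i \<in> {i\<in>{1..n}. zero_divisor K h (Pl i) = int m - int l}" .
qed

lemma psi_ne_if_order_m:
  assumes "f \<in> RR_space K G" "g \<in> RR_space K G" "f \<noteq> g" "i \<in> {1..n}"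
    and "zero_divisor K (f - g) (Pl i) = int m"
  shows "psi K Pl t n m f i \<noteq> psi K Pl t n m g i"
proof -
  have h: "f - g \<in> RR_space K G" "f - g \<noteq> 0"
    using RR_space_diff[OF subfield_if_global_function_field[OF function_field]] assms(1-3) by auto
  moreover have "Pl i (f - g) = int m"
    using assms(4,5) rational RR_space_valring_at[OF h(1)] G_supp h(2)
    by (auto simp: zero_divisor_def rational_place_def in_valring_def)
  ultimately have "loc_coeff K (Pl i) (t i) (f - g) m \<noteq> 0"
    using local_parameter.loc_coeff_leading_iff[OF local_parameter_at RR_space_valring_at]
      assms(4) G_supp
    by blast
  then show ?thesis using loc_coeff_RR_diff assms by (simp add: psi_def)
qed

lemma hamming_psi_ge:
  assumes G_prop: "\<forall>f\<in>RR_space K G - {0}.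
        ((\<forall>l\<in>{1..m}. j_ell Pl n m l (zero_divisor K f)
              \<le> 2 * flx x n l + (\<Sum>\<nu>=l+1..m. flx x n \<nu>)) \<and>
         J_m Pl n m (zero_divisor K f) \<le> 2 * (\<Sum>l=1..m. (l + 1) * flx x n l))
        \<longrightarrow> div_deg K (div_bar Pl n m (zero_divisor K f)) \<le> int s - 1"
    and f: "f \<in> RR_space K G" "Phi K Pl t n m f \<in> M_set K n m x c"
    and g: "g \<in> RR_space K G" "Phi K Pl t n m g \<in> M_set K n m x c"
    and "f \<noteq> g"
  shows "int ((m + 1) * n) + 1 - int s - int (2 * (\<Sum>l=1..m. (l + 1) * flx x n l))
    \<le> int (hamming n (psi K Pl t n m f) (psi K Pl t n m g))"
proof -
  define h where "h = f - g"
  define E where "E = zero_divisor K h"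
  define A where "A = (\<lambda>i k. Phi K Pl t n m f i k - c i k)"
  define B where "B = (\<lambda>i k. Phi K Pl t n m g i k - c i k)"
  have h: "h \<in> RR_space K G" "h \<noteq> 0"
    using RR_space_diff[OF subfield_if_global_function_field[OF function_field] f(1) g(1)]
      \<open>f \<noteq> g\<close>
    by (auto simp: h_def)
  have "Phi K Pl t n m h = (\<lambda>i k. A i k - B i k)"
    using Phi_diff[OF f(1) g(1)] by (simp add: h_def A_def B_def)
  then have j: "j_ell Pl n m l E = card (I_ell n m l (\<lambda>i k. A i k - B i k))" if "l \<in> {1..m}" for l
    using I_ell_Phi[OF h that] by (simp add: j_ell_def E_def)
  have A: "\<forall>l\<in>{1..m}. card (I_ell n m l A) \<le> flx x n l"
    and B: "\<forall>l\<in>{1..m}. card (I_ell n m l B) \<le> flx x n l"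
    using M_set_card_I_ell[OF f(2)] M_set_card_I_ell[OF g(2)] by (simp_all add: A_def B_def)
  have "J_m Pl n m E = (\<Sum>l=1..m. (l + 1) * card (I_ell n m l (\<lambda>i k. A i k - B i k)))"
    unfolding J_m_def using j by simp
  then have J: "J_m Pl n m E \<le> 2 * (\<Sum>l=1..m. (l + 1) * flx x n l)"
    using weighted_card_I_ell_diff_le[OF A B] by simp
  moreover have "\<forall>l\<in>{1..m}. j_ell Pl n m l E \<le> 2 * flx x n l + (\<Sum>\<nu>=l+1..m. flx x n \<nu>)"
    using card_I_ell_diff_le[OF A B] j by simp
  ultimately have deg: "div_deg K (div_bar Pl n m E) \<le> int s - 1"
    using G_prop h by (simp add: E_def)
  have "\<forall>i\<in>{1..n}. E (Pl i) \<ge> 0" by (simp add: E_def zero_divisor_def)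
  note count = card_order_m_ge[OF inj rational this, of m]
  have "{i\<in>{1..n}. E (Pl i) = int m} \<subseteq> {i\<in>{1..n}. psi K Pl t n m f i \<noteq> psi K Pl t n m g i}"
    using psi_ne_if_order_m f(1) g(1) \<open>f \<noteq> g\<close> by (auto simp: E_def h_def)
  then have "card {i\<in>{1..n}. E (Pl i) = int m} \<le> hamming n (psi K Pl t n m f) (psi K Pl t n m g)"
    unfolding hamming_def by (intro card_mono) auto
  then show ?thesis using count J deg by linarith
qed

end

end

lemma card_and_min_dist_image:
  assumes "\<And>f g. f \<in> N \<Longrightarrow> g \<in> N \<Longrightarrow> f \<noteq> g \<Longrightarrow> b \<le> hamming n (\<psi> f) (\<psi> g)" and "1 \<le> b"
  shows "card (\<psi> ` N) = card N" and "enat b \<le> min_dist n (\<psi> ` N)"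
proof -
  have "inj_on \<psi> N"
  proof (rule inj_onI, rule ccontr)
    fix f g assume "f \<in> N" "g \<in> N" "\<psi> f = \<psi> g" "f \<noteq> g"
    then show False using assms by (fastforce simp: hamming_def)
  qed
  then show "card (\<psi> ` N) = card N" by (rule card_image)
  show "enat b \<le> min_dist n (\<psi> ` N)"
    unfolding min_dist_def
  proof (rule INF_greatest)
    fix p assume "p \<in> {(u, v). u \<in> \<psi> ` N \<and> v \<in> \<psi> ` N \<and> u \<noteq> v}"
    then obtain f g where "f \<in> N" "g \<in> N" "p = (\<psi> f, \<psi> g)" "\<psi> f \<noteq> \<psi> g" by auto
    then show "enat b \<le> enat (hamming n (fst p) (snd p))" using assms(1)[of f g] by auto
  qed
qed

theorem theorem2p9:
  fixes K :: "'a::field set" and q :: nat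
    and Pl :: "nat \<Rightarrow> ('a \<Rightarrow> int)" and t :: "nat \<Rightarrow> 'a"
    and n m r s :: nat and x :: "nat \<Rightarrow> real"
    and G :: "('a \<Rightarrow> int) \<Rightarrow> int" and c :: "nat \<Rightarrow> nat \<Rightarrow> 'a"
    and N :: "'a set" and C :: "(nat \<Rightarrow> 'a) set"
  assumes gff: "global_function_field K" and q: "q = card K"
    and n1: "n \<ge> 1" and Pinj: "inj_on Pl {1..n}"
    and Prat: "\<forall>i\<in>{1..n}. rational_place K (Pl i)"
    and tpar: "\<forall>i\<in>{1..n}. Pl i (t i) = 1"
    and m1: "m \<ge> 1"
    and sr: "s \<le> r"
    and xnn: "\<forall>l\<in>{1..m}. x l \<ge> 0" and xsum: "(\<Sum>l=1..m. x l) \<le> 1"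
    and Vh: "card (V_set K Pl n m r s (flx x n)) < class_number K"
    and Gdiv: "is_divisor K G" and Gdeg: "div_deg K G = int r"
    and Gsupp: "\<forall>i\<in>{1..n}. G (Pl i) = 0"
    and Gprop: "\<forall>f\<in>RR_space K G - {0}.
        ((\<forall>l\<in>{1..m}. j_ell Pl n m l (zero_divisor K f)
              \<le> 2 * flx x n l + (\<Sum>\<nu>=l+1..m. flx x n \<nu>)) \<and>
         J_m Pl n m (zero_divisor K f) \<le> 2 * (\<Sum>l=1..m. (l + 1) * flx x n l))
        \<longrightarrow> div_deg K (div_bar Pl n m (zero_divisor K f)) \<le> int s - 1"
    and big: "card (RR_space K G) * card (M_set K n m x (\<lambda>i k. 0)) > q ^ (m * n)"
    and len: "(m + 1) * n \<ge> s + 2 * (\<Sum>l=1..m. (l + 1) * flx x n l)"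
    and cvec: "c \<in> vecs K n m"
    and Ndef: "N = {f\<in>RR_space K G. Phi K Pl t n m f \<in> M_set K n m x c}"
    and Nbig: "real (card N) \<ge>
        real (card (RR_space K G)) * real (card (M_set K n m x (\<lambda>i k. 0))) / real (q ^ (m * n))"
    and Cdef: "C = psi K Pl t n m ` N"
  shows "int (card C) \<ge>
           \<lceil>real (card (RR_space K G)) * real (card (M_set K n m x (\<lambda>i k. 0))) / real (q ^ (m * n))\<rceil>
         \<and> enat ((m + 1) * n + 1 - s - 2 * (\<Sum>l=1..m. (l + 1) * flx x n l)) \<le> min_dist n C"
proof -
  \<comment> \<open>The hypotheses on \<open>q\<close>, \<open>x\<close>, \<open>V_m\<close>, the class number, \<open>deg G\<close> and the size of \<open>L(G) \<times> M\<close>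
    serve in the paper to produce \<open>G\<close> and \<open>c\<close>.\<close>
  interpret rational_places K Pl t n using gff Pinj Prat tpar by unfold_locales
  define b where "b = (m + 1) * n + 1 - s - 2 * (\<Sum>l=1..m. (l + 1) * flx x n l)"
  have "b \<le> hamming n (psi K Pl t n m f) (psi K Pl t n m g)" if "f \<in> N" "g \<in> N" "f \<noteq> g" for f g
  proof -
    have "int ((m + 1) * n) + 1 - int s - int (2 * (\<Sum>l=1..m. (l + 1) * flx x n l))
        \<le> int (hamming n (psi K Pl t n m f) (psi K Pl t n m g))"
      using hamming_psi_ge[OF Gsupp Gprop] that unfolding Ndef by blast
    then show ?thesis using len unfolding b_def by linarith
  qed
  moreover have "1 \<le> b" using len by (simp add: b_def)
  ultimately have "card C = card N" "enat b \<le> min_dist n C"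
    unfolding Cdef using card_and_min_dist_image[of N b n "psi K Pl t n m"] by blast+
  then show ?thesis using Nbig by (simp add: b_def ceiling_le_iff)
qed

end
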